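(* Let $R$ be a left coherent ring and $M\in R\text{-}\mathbf{Mod}$. Then (1) $\ker(\mathrm{Defect})\subseteq\ker(\mathrm{ev}_M)$ if and only if $M$ is fp-injective; (2) $\ker(\mathrm{Defect})=\ker(\mathrm{ev}_M)$ if and only if $M$ is fp-injective and an fp-cogenerator.
   Context: $R$ is left coherent if every finitely generated left ideal is finitely presented; then $R\text{-}\mathbf{mod}$ (finitely presented left modules) is abelian. $R\text{-}\mathbf{mod}\text{-}\mathbf{mod}$ is the abelian category of finitely presented additive functors $\mathcal G:R\text{-}\mathbf{mod}\to\mathbf{Ab}$ (with a presentation $\operatorname{Hom}(N',-)\xrightarrow{\operatorname{Hom}(\alpha,-)}\operatorname{Hom}(N,-)\to\mathcal G\to0$, $\alpha:N\to N'$ in $R\text{-}\mathbf{mod}$); $\mathrm{Defect}(\mathcal G):=\ker(\alpha)$, and $\ker(\mathrm{Defect})$ is the full subcategory of $\mathcal G$ with $\mathrm{Defect}(\mathcal G)=0$. Each $\mathcal G$ is identified with its extension to all left modules commuting with filtered colimits; $\mathrm{ev}_M(\mathcal G)=\mathcal G(M)$, and $\ker(\mathrm{ev}_M)$ is the full subcategory of $\mathcal G$ with $\mathcal G(M)=0$. $M$ is fp-injective if $\operatorname{Ext}^1(N,M)=0$ for all finitely presented left modules $N$; $M$ is an fp-cogenerator if $\operatorname{Hom}(-,M):(R\text{-}\mathbf{mod})^{\mathrm{op}}\to\mathbf{Ab}$ is faithful. *)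

theory Defs
  imports "HOL-Algebra.Module"
begin

text \<open>Left modules over a (not necessarily commutative) ring R.
  HOL-Algebra's locale module requires a commutative ring, so we define
  left modules directly, reusing only the record type module.\<close>

definition lmod :: "'a ring \<Rightarrow> ('a, 'm) module \<Rightarrow> bool" where
  "lmod R M \<longleftrightarrow> ring R \<and> abelian_group M \<and>
     (\<forall>a\<in>carrier R. \<forall>x\<in>carrier M. smult M a x \<in> carrier M) \<and>
     (\<forall>a\<in>carrier R. \<forall>x\<in>carrier M. \<forall>y\<in>carrier M.
        smult M a (x \<oplus>\<^bsub>M\<^esub> y) = smult M a x \<oplus>\<^bsub>M\<^esub> smult M a y) \<and>
     (\<forall>a\<in>carrier R. \<forall>b\<in>carrier R. \<forall>x\<in>carrier M.
        smult M (a \<oplus>\<^bsub>R\<^esub> b) x = smult M a x \<oplus>\<^bsub>M\<^esub> smult M b x) \<and>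
     (\<forall>a\<in>carrier R. \<forall>b\<in>carrier R. \<forall>x\<in>carrier M.
        smult M (a \<otimes>\<^bsub>R\<^esub> b) x = smult M a (smult M b x)) \<and>
     (\<forall>x\<in>carrier M. smult M \<one>\<^bsub>R\<^esub> x = x)"

text \<open>R-linear maps (considered on the carrier only).\<close>
definition lhom :: "'a ring \<Rightarrow> ('a, 'm) module \<Rightarrow> ('a, 'n) module \<Rightarrow> ('m \<Rightarrow> 'n) set" where
  "lhom R M N = {f. (\<forall>x\<in>carrier M. f x \<in> carrier N) \<and>
     (\<forall>x\<in>carrier M. \<forall>y\<in>carrier M. f (x \<oplus>\<^bsub>M\<^esub> y) = f x \<oplus>\<^bsub>N\<^esub> f y) \<and>
     (\<forall>a\<in>carrier R. \<forall>x\<in>carrier M. f (smult M a x) = smult N a (f x))}"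

definition lsubmod :: "'a ring \<Rightarrow> ('a, 'm) module \<Rightarrow> 'm set \<Rightarrow> bool" where
  "lsubmod R M S \<longleftrightarrow> S \<subseteq> carrier M \<and> \<zero>\<^bsub>M\<^esub> \<in> S \<and>
     (\<forall>x\<in>S. \<forall>y\<in>S. x \<oplus>\<^bsub>M\<^esub> y \<in> S) \<and>
     (\<forall>a\<in>carrier R. \<forall>x\<in>S. smult M a x \<in> S)"

definition lfingen :: "'a ring \<Rightarrow> ('a, 'm) module \<Rightarrow> 'm set \<Rightarrow> bool" where
  "lfingen R M S \<longleftrightarrow> lsubmod R M S \<and>
     (\<exists>X. finite X \<and> X \<subseteq> S \<and> (\<forall>T. lsubmod R M T \<and> X \<subseteq> T \<longrightarrow> S \<subseteq> T))"

definition freemod :: "'a ring \<Rightarrow> nat \<Rightarrow> ('a, nat \<Rightarrow> 'a) module" where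
  "freemod R n = \<lparr>carrier = {v. (\<forall>i. v i \<in> carrier R) \<and> (\<forall>i\<ge>n. v i = \<zero>\<^bsub>R\<^esub>)},
     mult = (\<lambda>v w. undefined), one = undefined,
     zero = (\<lambda>i. \<zero>\<^bsub>R\<^esub>),
     add = (\<lambda>v w i. v i \<oplus>\<^bsub>R\<^esub> w i),
     smult = (\<lambda>a v i. a \<otimes>\<^bsub>R\<^esub> v i)\<rparr>"

definition lfp :: "'a ring \<Rightarrow> ('a, 'm) module \<Rightarrow> bool" where
  "lfp R N \<longleftrightarrow> lmod R N \<and> (\<exists>n f. f \<in> lhom R (freemod R n) N \<and>
     f ` carrier (freemod R n) = carrier N \<and>
     lfingen R (freemod R n) {v \<in> carrier (freemod R n). f v = \<zero>\<^bsub>N\<^esub>})"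

definition ring_lmod :: "'a ring \<Rightarrow> ('a, 'a) module" where
  "ring_lmod R = \<lparr>carrier = carrier R, mult = mult R, one = one R,
     zero = zero R, add = add R, smult = mult R\<rparr>"

definition left_coherent :: "'a ring \<Rightarrow> bool" where
  "left_coherent R \<longleftrightarrow> ring R \<and>
     (\<forall>I. lfingen R (ring_lmod R) I \<longrightarrow> lfp R ((ring_lmod R)\<lparr>carrier := I\<rparr>))"

text \<open>Objects of R-mod: every finitely presented module is isomorphic to a quotient
  of some R^n, whose carrier consists of cosets, i.e. of type (nat => 'a) set.
  We therefore take R-mod to consist of the finitely presented modules of this type.\<close>
type_synonym 'a fpmod = "('a, (nat \<Rightarrow> 'a) set) module"

text \<open>Ext^1(N,M) = 0 (Yoneda description): every short exact sequence
  0 -> M -> E -> N -> 0 splits.  The carrier of any such E is in bijection with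
  carrier M x carrier N, so E may be taken with carrier type 'm x 'n.\<close>
definition ext1_zero :: "'a ring \<Rightarrow> ('a, 'n) module \<Rightarrow> ('a, 'm) module \<Rightarrow> bool" where
  "ext1_zero R N M \<longleftrightarrow>
     (\<forall>(E :: ('a, 'm \<times> 'n) module) i p.
        lmod R E \<and> i \<in> lhom R M E \<and> p \<in> lhom R E N \<and>
        inj_on i (carrier M) \<and> p ` carrier E = carrier N \<and>
        i ` carrier M = {e \<in> carrier E. p e = \<zero>\<^bsub>N\<^esub>}
        \<longrightarrow> (\<exists>r \<in> lhom R E M. \<forall>x\<in>carrier M. r (i x) = x))"

definition fp_injective :: "'a ring \<Rightarrow> ('a, 'm) module \<Rightarrow> bool" where
  "fp_injective R M \<longleftrightarrow> (\<forall>N :: 'a fpmod. lfp R N \<longrightarrow> ext1_zero R N M)"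

text \<open>Hom(-,M) : (R-mod)^op -> Ab is faithful.\<close>
definition fp_cogenerator :: "'a ring \<Rightarrow> ('a, 'm) module \<Rightarrow> bool" where
  "fp_cogenerator R M \<longleftrightarrow>
     (\<forall>(A :: 'a fpmod) (B :: 'a fpmod) f g.
        lfp R A \<and> lfp R B \<and> f \<in> lhom R A B \<and> g \<in> lhom R A B \<and>
        (\<forall>h \<in> lhom R B M. \<forall>x\<in>carrier A. h (f x) = h (g x))
        \<longrightarrow> (\<forall>x\<in>carrier A. f x = g x))"

text \<open>A finitely presented functor G is given by a presentation
  Hom(N',-) --Hom(alpha,-)--> Hom(N,-) --> G --> 0 with alpha : N -> N' in R-mod.
  Defect(G) = ker alpha; G(M) = coker(Hom(alpha,M)) (the extension commuting with
  filtered colimits, as N, N' are finitely presented).\<close>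
definition defect_zero :: "('a, 'n) module \<Rightarrow> ('a, 'k) module \<Rightarrow> ('n \<Rightarrow> 'k) \<Rightarrow> bool" where
  "defect_zero N N' \<alpha> \<longleftrightarrow> (\<forall>x\<in>carrier N. \<alpha> x = \<zero>\<^bsub>N'\<^esub> \<longrightarrow> x = \<zero>\<^bsub>N\<^esub>)"

definition ev_zero :: "'a ring \<Rightarrow> ('a, 'n) module \<Rightarrow> ('a, 'k) module \<Rightarrow> ('n \<Rightarrow> 'k)
    \<Rightarrow> ('a, 'm) module \<Rightarrow> bool" where
  "ev_zero R N N' \<alpha> M \<longleftrightarrow>
     (\<forall>h \<in> lhom R N M. \<exists>\<beta> \<in> lhom R N' M. \<forall>x\<in>carrier N. \<beta> (\<alpha> x) = h x)"

definition kerDefect_sub_kerEv :: "'a ring \<Rightarrow> ('a, 'm) module \<Rightarrow> bool" where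
  "kerDefect_sub_kerEv R M \<longleftrightarrow>
     (\<forall>(N :: 'a fpmod) (N' :: 'a fpmod) \<alpha>.
        lfp R N \<and> lfp R N' \<and> \<alpha> \<in> lhom R N N' \<and> defect_zero N N' \<alpha>
        \<longrightarrow> ev_zero R N N' \<alpha> M)"

definition kerDefect_eq_kerEv :: "'a ring \<Rightarrow> ('a, 'm) module \<Rightarrow> bool" where
  "kerDefect_eq_kerEv R M \<longleftrightarrow>
     (\<forall>(N :: 'a fpmod) (N' :: 'a fpmod) \<alpha>.
        lfp R N \<and> lfp R N' \<and> \<alpha> \<in> lhom R N N'
        \<longrightarrow> (defect_zero N N' \<alpha> \<longleftrightarrow> ev_zero R N N' \<alpha> M))"

end

theory Submission
  imports Defs
begin

text \<open>
  (1) If M is fp-injective and \<alpha> : N \<rightarrow> N' is a monomorphism in R-mod, then for every h : N \<rightarrow> M the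
  pushout of \<alpha> along h is an extension of coker \<alpha> by M; it splits, and a retraction extends h along
  \<alpha>.  Conversely, write a finitely presented N as R^n / K with K finitely generated; lifting R^n \<rightarrow> N
  into an extension E of N by M gives a map K \<rightarrow> M whose extension to R^n yields a retraction of
  M \<rightarrow> E.  Maps from finitely generated K \<subseteq> R^n extend to R^n by induction on n: the last coordinate
  maps K onto a finitely generated, hence (by coherence) finitely presented, left ideal I, the part of
  K inside R^(n-1) is again finitely generated, and maps I \<rightarrow> M extend along I \<subseteq> R by hypothesis.

  (2) If ker(Defect) = ker(ev_M) and h \<circ> f = h \<circ> g for all h : B \<rightarrow> M, every h factors through the
  projection of B onto B / R (f x - g x), so that projection has zero defect and f x = g x.  Conversely,
  if ev_M kills a presentation \<alpha> and \<alpha> x = 0, every h : N \<rightarrow> M kills x, and faithfulness of Hom(-, M)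
  applied to the map R \<rightarrow> N picking out x forces x = 0.
\<close>

section \<open>Left modules and linear maps\<close>

context abelian_group
begin

lemma minus_zero_iff: "x \<in> carrier G \<Longrightarrow> y \<in> carrier G \<Longrightarrow> x \<ominus> y = \<zero> \<longleftrightarrow> x = y"
  using minus_equality[of x "\<ominus> y"] minus_minus[of y] by (auto simp: minus_eq r_neg)

lemma neg_zero[simp]: "\<ominus> \<zero> = \<zero>"
  by (rule minus_equality) simp_all

lemma sub_zero[simp]: "x \<in> carrier G \<Longrightarrow> x \<ominus> \<zero> = x"
  by (simp add: minus_eq)

lemma add_cancel_neg_right: "x \<in> carrier G \<Longrightarrow> y \<in> carrier G \<Longrightarrow> x \<oplus> (y \<oplus> \<ominus> x) = y"
  by (simp add: a_comm[of y "\<ominus> x"] r_neg2)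

lemma add_cancel_neg_middle:
  "x \<in> carrier G \<Longrightarrow> y \<in> carrier G \<Longrightarrow> z \<in> carrier G \<Longrightarrow> x \<oplus> (y \<oplus> (\<ominus> x \<oplus> z)) = y \<oplus> z"
  by (simp add: a_lcomm[of x y] r_neg2)

lemma neg_cancel_add_right: "x \<in> carrier G \<Longrightarrow> y \<in> carrier G \<Longrightarrow> \<ominus> x \<oplus> (y \<oplus> x) = y"
  by (simp add: a_comm[of y x] r_neg1)

lemma neg_cancel_add_middle:
  "x \<in> carrier G \<Longrightarrow> y \<in> carrier G \<Longrightarrow> z \<in> carrier G \<Longrightarrow> \<ominus> x \<oplus> (y \<oplus> (x \<oplus> z)) = y \<oplus> z"
  by (simp add: a_lcomm[of "\<ominus> x" y] r_neg1)

text \<open>AC-rewriting alone does not cancel x against \<ominus> x when the two are not adjacent.\<close>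

lemmas a_cancel_simps = minus_eq a_assoc minus_add minus_minus a_comm a_lcomm r_neg1 r_neg2
  add_cancel_neg_right add_cancel_neg_middle neg_cancel_add_right neg_cancel_add_middle
  r_neg l_neg r_zero l_zero

lemma minus_add_cancel: "x \<in> carrier G \<Longrightarrow> y \<in> carrier G \<Longrightarrow> x \<ominus> y \<oplus> y = x"
  by (simp add: minus_eq a_assoc l_neg)

lemma add_minus_cancel: "x \<in> carrier G \<Longrightarrow> y \<in> carrier G \<Longrightarrow> x \<oplus> (y \<ominus> x) = y"
  by (simp add: minus_eq add_cancel_neg_right)

end

locale lmodule =
  fixes R :: "'a ring" and M :: "('a,'m) module"
  assumes lm: "lmod R M"
begin

sublocale R: ring R using lm by (simp add: lmod_def)
sublocale M: abelian_group M using lm by (simp add: lmod_def)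

lemma smult_closed[simp,intro]: "a \<in> carrier R \<Longrightarrow> x \<in> carrier M \<Longrightarrow> a \<odot>\<^bsub>M\<^esub> x \<in> carrier M"
  using lm by (simp add: lmod_def)

lemma smult_add: "a \<in> carrier R \<Longrightarrow> x \<in> carrier M \<Longrightarrow> y \<in> carrier M \<Longrightarrow>
   a \<odot>\<^bsub>M\<^esub> (x \<oplus>\<^bsub>M\<^esub> y) = a \<odot>\<^bsub>M\<^esub> x \<oplus>\<^bsub>M\<^esub> a \<odot>\<^bsub>M\<^esub> y"
  using lm by (simp add: lmod_def)

lemma add_smult: "a \<in> carrier R \<Longrightarrow> b \<in> carrier R \<Longrightarrow> x \<in> carrier M \<Longrightarrow>
   (a \<oplus>\<^bsub>R\<^esub> b) \<odot>\<^bsub>M\<^esub> x = a \<odot>\<^bsub>M\<^esub> x \<oplus>\<^bsub>M\<^esub> b \<odot>\<^bsub>M\<^esub> x"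
  using lm by (simp add: lmod_def)

lemma mult_smult: "a \<in> carrier R \<Longrightarrow> b \<in> carrier R \<Longrightarrow> x \<in> carrier M \<Longrightarrow>
   (a \<otimes>\<^bsub>R\<^esub> b) \<odot>\<^bsub>M\<^esub> x = a \<odot>\<^bsub>M\<^esub> (b \<odot>\<^bsub>M\<^esub> x)"
  using lm by (simp add: lmod_def)

lemma one_smult[simp]: "x \<in> carrier M \<Longrightarrow> \<one>\<^bsub>R\<^esub> \<odot>\<^bsub>M\<^esub> x = x"
  using lm by (simp add: lmod_def)

lemma zero_smult[simp]: "x \<in> carrier M \<Longrightarrow> \<zero>\<^bsub>R\<^esub> \<odot>\<^bsub>M\<^esub> x = \<zero>\<^bsub>M\<^esub>"
proof -
  assume x: "x \<in> carrier M"
  have "\<zero>\<^bsub>R\<^esub> \<odot>\<^bsub>M\<^esub> x \<oplus>\<^bsub>M\<^esub> \<zero>\<^bsub>R\<^esub> \<odot>\<^bsub>M\<^esub> x = \<zero>\<^bsub>R\<^esub> \<odot>\<^bsub>M\<^esub> x \<oplus>\<^bsub>M\<^esub> \<zero>\<^bsub>M\<^esub>"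
    using add_smult[of "\<zero>\<^bsub>R\<^esub>" "\<zero>\<^bsub>R\<^esub>" x] x by simp
  thus ?thesis using x by simp
qed

lemma smult_zero[simp]: "a \<in> carrier R \<Longrightarrow> a \<odot>\<^bsub>M\<^esub> \<zero>\<^bsub>M\<^esub> = \<zero>\<^bsub>M\<^esub>"
proof -
  assume a: "a \<in> carrier R"
  have "a \<odot>\<^bsub>M\<^esub> \<zero>\<^bsub>M\<^esub> \<oplus>\<^bsub>M\<^esub> a \<odot>\<^bsub>M\<^esub> \<zero>\<^bsub>M\<^esub> = a \<odot>\<^bsub>M\<^esub> \<zero>\<^bsub>M\<^esub> \<oplus>\<^bsub>M\<^esub> \<zero>\<^bsub>M\<^esub>"
    using smult_add[of a "\<zero>\<^bsub>M\<^esub>" "\<zero>\<^bsub>M\<^esub>"] a by simp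
  thus ?thesis using a by simp
qed

lemma smult_neg: "a \<in> carrier R \<Longrightarrow> x \<in> carrier M \<Longrightarrow> a \<odot>\<^bsub>M\<^esub> (\<ominus>\<^bsub>M\<^esub> x) = \<ominus>\<^bsub>M\<^esub> (a \<odot>\<^bsub>M\<^esub> x)"
proof -
  assume a: "a \<in> carrier R" and x: "x \<in> carrier M"
  have "a \<odot>\<^bsub>M\<^esub> (\<ominus>\<^bsub>M\<^esub> x) \<oplus>\<^bsub>M\<^esub> a \<odot>\<^bsub>M\<^esub> x = \<zero>\<^bsub>M\<^esub>"
    using smult_add[of a "\<ominus>\<^bsub>M\<^esub> x" x] a x by (simp add: M.l_neg)
  thus ?thesis using a x by (simp add: M.minus_equality)
qed

lemma neg_smult: "a \<in> carrier R \<Longrightarrow> x \<in> carrier M \<Longrightarrow> (\<ominus>\<^bsub>R\<^esub> a) \<odot>\<^bsub>M\<^esub> x = \<ominus>\<^bsub>M\<^esub> (a \<odot>\<^bsub>M\<^esub> x)"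
proof -
  assume a: "a \<in> carrier R" and x: "x \<in> carrier M"
  have "(\<ominus>\<^bsub>R\<^esub> a) \<odot>\<^bsub>M\<^esub> x \<oplus>\<^bsub>M\<^esub> a \<odot>\<^bsub>M\<^esub> x = \<zero>\<^bsub>M\<^esub>"
    using add_smult[of "\<ominus>\<^bsub>R\<^esub> a" a x] a x by (simp add: R.l_neg)
  thus ?thesis using a x by (simp add: M.minus_equality)
qed

lemma smult_minus: "a \<in> carrier R \<Longrightarrow> x \<in> carrier M \<Longrightarrow> y \<in> carrier M \<Longrightarrow>
   a \<odot>\<^bsub>M\<^esub> (x \<ominus>\<^bsub>M\<^esub> y) = a \<odot>\<^bsub>M\<^esub> x \<ominus>\<^bsub>M\<^esub> a \<odot>\<^bsub>M\<^esub> y"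
  by (simp add: M.minus_eq smult_add smult_neg)

end

lemma lmod_ring: "lmod R M \<Longrightarrow> ring R"
  by (simp add: lmod_def)

lemma lhomI:
  assumes "\<And>x. x \<in> carrier M \<Longrightarrow> f x \<in> carrier N"
    "\<And>x y. x \<in> carrier M \<Longrightarrow> y \<in> carrier M \<Longrightarrow> f (x \<oplus>\<^bsub>M\<^esub> y) = f x \<oplus>\<^bsub>N\<^esub> f y"
    "\<And>a x. a \<in> carrier R \<Longrightarrow> x \<in> carrier M \<Longrightarrow> f (a \<odot>\<^bsub>M\<^esub> x) = a \<odot>\<^bsub>N\<^esub> f x"
  shows "f \<in> lhom R M N"
  using assms unfolding lhom_def by auto

lemma lhom_closed: "f \<in> lhom R M N \<Longrightarrow> x \<in> carrier M \<Longrightarrow> f x \<in> carrier N"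
  unfolding lhom_def by auto

lemma lhom_add: "f \<in> lhom R M N \<Longrightarrow> x \<in> carrier M \<Longrightarrow> y \<in> carrier M \<Longrightarrow>
    f (x \<oplus>\<^bsub>M\<^esub> y) = f x \<oplus>\<^bsub>N\<^esub> f y"
  unfolding lhom_def by auto

lemma lhom_smult: "f \<in> lhom R M N \<Longrightarrow> a \<in> carrier R \<Longrightarrow> x \<in> carrier M \<Longrightarrow>
    f (a \<odot>\<^bsub>M\<^esub> x) = a \<odot>\<^bsub>N\<^esub> f x"
  unfolding lhom_def by auto

lemma lhom_zero:
  assumes "lmod R M" "lmod R N" "f \<in> lhom R M N"
  shows "f \<zero>\<^bsub>M\<^esub> = \<zero>\<^bsub>N\<^esub>"
proof -
  interpret M: lmodule R M by (rule lmodule.intro) fact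
  interpret N: lmodule R N by (rule lmodule.intro) fact
  have "f \<zero>\<^bsub>M\<^esub> = f (\<zero>\<^bsub>R\<^esub> \<odot>\<^bsub>M\<^esub> \<zero>\<^bsub>M\<^esub>)" by simp
  also have "\<dots> = \<zero>\<^bsub>R\<^esub> \<odot>\<^bsub>N\<^esub> f \<zero>\<^bsub>M\<^esub>" by (rule lhom_smult[OF assms(3)]) simp_all
  also have "\<dots> = \<zero>\<^bsub>N\<^esub>" using lhom_closed[OF assms(3)] by simp
  finally show ?thesis .
qed

lemma lhom_neg:
  assumes "lmod R M" "lmod R N" "f \<in> lhom R M N" "x \<in> carrier M"
  shows "f (\<ominus>\<^bsub>M\<^esub> x) = \<ominus>\<^bsub>N\<^esub> f x"
proof -
  interpret M: lmodule R M by (rule lmodule.intro) fact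
  interpret N: lmodule R N by (rule lmodule.intro) fact
  have "f (\<ominus>\<^bsub>M\<^esub> x) = f ((\<ominus>\<^bsub>R\<^esub> \<one>\<^bsub>R\<^esub>) \<odot>\<^bsub>M\<^esub> x)" using assms by (simp add: M.neg_smult)
  also have "\<dots> = \<ominus>\<^bsub>N\<^esub> f x" using assms lhom_smult[OF assms(3)] lhom_closed[OF assms(3)]
    by (simp add: N.neg_smult)
  finally show ?thesis .
qed

lemma lhom_minus:
  assumes "lmod R M" "lmod R N" "f \<in> lhom R M N" "x \<in> carrier M" "y \<in> carrier M"
  shows "f (x \<ominus>\<^bsub>M\<^esub> y) = f x \<ominus>\<^bsub>N\<^esub> f y"
proof -
  interpret M: lmodule R M by (rule lmodule.intro) fact
  show ?thesis using assms lhom_add[OF assms(3)] lhom_neg[OF assms(1-3)]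
    by (simp add: M.M.minus_eq abelian_group.minus_eq lmod_def)
qed

lemma lhom_comp: "f \<in> lhom R M N \<Longrightarrow> g \<in> lhom R N P \<Longrightarrow> (\<lambda>x. g (f x)) \<in> lhom R M P"
  unfolding lhom_def by auto

lemma lhom_id: "(\<lambda>x. x) \<in> lhom R M M"
  unfolding lhom_def by auto

lemma lhom_zero_map: "lmod R N \<Longrightarrow> (\<lambda>x. \<zero>\<^bsub>N\<^esub>) \<in> lhom R M N"
proof -
  assume "lmod R N"
  then interpret N: lmodule R N by (rule lmodule.intro)
  show ?thesis by (rule lhomI) auto
qed

lemma lhom_add_map:
  assumes "lmod R N" "f \<in> lhom R M N" "g \<in> lhom R M N"
  shows "(\<lambda>x. f x \<oplus>\<^bsub>N\<^esub> g x) \<in> lhom R M N"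
proof -
  interpret N: lmodule R N by (rule lmodule.intro) fact
  note c = lhom_closed[OF assms(2)] lhom_closed[OF assms(3)]
  show ?thesis
  proof (rule lhomI)
    fix x y assume xy: "x \<in> carrier M" "y \<in> carrier M"
    show "f (x \<oplus>\<^bsub>M\<^esub> y) \<oplus>\<^bsub>N\<^esub> g (x \<oplus>\<^bsub>M\<^esub> y) = (f x \<oplus>\<^bsub>N\<^esub> g x) \<oplus>\<^bsub>N\<^esub> (f y \<oplus>\<^bsub>N\<^esub> g y)"
      using xy c lhom_add[OF assms(2)] lhom_add[OF assms(3)] by (simp add: N.M.a_ac)
  next
    fix a x assume "a \<in> carrier R" "x \<in> carrier M"
    thus "f (a \<odot>\<^bsub>M\<^esub> x) \<oplus>\<^bsub>N\<^esub> g (a \<odot>\<^bsub>M\<^esub> x) = a \<odot>\<^bsub>N\<^esub> (f x \<oplus>\<^bsub>N\<^esub> g x)"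
      using c lhom_smult[OF assms(2)] lhom_smult[OF assms(3)] by (simp add: N.smult_add)
  qed (use c in auto)
qed

lemma lhom_neg_map:
  assumes "lmod R N" "f \<in> lhom R M N"
  shows "(\<lambda>x. \<ominus>\<^bsub>N\<^esub> f x) \<in> lhom R M N"
proof -
  interpret N: lmodule R N by (rule lmodule.intro) fact
  note c = lhom_closed[OF assms(2)]
  show ?thesis
  proof (rule lhomI)
    fix x y assume "x \<in> carrier M" "y \<in> carrier M"
    thus "\<ominus>\<^bsub>N\<^esub> f (x \<oplus>\<^bsub>M\<^esub> y) = \<ominus>\<^bsub>N\<^esub> f x \<oplus>\<^bsub>N\<^esub> \<ominus>\<^bsub>N\<^esub> f y"
      using c lhom_add[OF assms(2)] by (simp add: N.M.minus_add N.M.a_comm)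
  next
    fix a x assume "a \<in> carrier R" "x \<in> carrier M"
    thus "\<ominus>\<^bsub>N\<^esub> f (a \<odot>\<^bsub>M\<^esub> x) = a \<odot>\<^bsub>N\<^esub> \<ominus>\<^bsub>N\<^esub> f x"
      using c lhom_smult[OF assms(2)] by (simp add: N.smult_neg)
  qed (use c in auto)
qed

lemma lhom_minus_map:
  assumes "lmod R N" "f \<in> lhom R M N" "g \<in> lhom R M N"
  shows "(\<lambda>x. f x \<ominus>\<^bsub>N\<^esub> g x) \<in> lhom R M N"
  using lhom_add_map[OF assms(1,2) lhom_neg_map[OF assms(1,3)]] by (simp add: a_minus_def)

lemma lhom_restrict: "f \<in> lhom R M N \<Longrightarrow> S \<subseteq> carrier M \<Longrightarrow> f \<in> lhom R (M\<lparr>carrier := S\<rparr>) N"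
  unfolding lhom_def by (auto simp: subset_iff)

lemma lhom_corestrict: "f \<in> lhom R M N \<Longrightarrow> f ` carrier M \<subseteq> S \<Longrightarrow> f \<in> lhom R M (N\<lparr>carrier := S\<rparr>)"
  unfolding lhom_def by auto

lemma lhom_from_corestrict: "f \<in> lhom R M (N\<lparr>carrier := S\<rparr>) \<Longrightarrow> S \<subseteq> carrier N \<Longrightarrow> f \<in> lhom R M N"
  unfolding lhom_def by auto

lemma lhom_inv_into:
  assumes "f \<in> lhom R M N" "bij_betw f (carrier M) (carrier N)" "lmod R M"
  shows "inv_into (carrier M) f \<in> lhom R N M"
proof -
  interpret lmodule R M by (rule lmodule.intro) fact
  let ?g = "inv_into (carrier M) f"
  have gc: "?g y \<in> carrier M" "f (?g y) = y" if "y \<in> carrier N" for y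
    using assms(2) that by (auto simp: bij_betw_def inv_into_into f_inv_into_f)
  have gf: "?g (f x) = x" if "x \<in> carrier M" for x
    using assms(2) that by (simp add: bij_betw_def)
  show ?thesis
  proof (rule lhomI)
    fix x y assume xy: "x \<in> carrier N" "y \<in> carrier N"
    have "?g (x \<oplus>\<^bsub>N\<^esub> y) = ?g (f (?g x) \<oplus>\<^bsub>N\<^esub> f (?g y))" using gc xy by simp
    also have "\<dots> = ?g (f (?g x \<oplus>\<^bsub>M\<^esub> ?g y))" using lhom_add[OF assms(1)] gc xy by simp
    also have "\<dots> = ?g x \<oplus>\<^bsub>M\<^esub> ?g y" using xy gc by (intro gf) auto
    finally show "?g (x \<oplus>\<^bsub>N\<^esub> y) = ?g x \<oplus>\<^bsub>M\<^esub> ?g y" .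
  next
    fix a x assume ax: "a \<in> carrier R" "x \<in> carrier N"
    have "?g (a \<odot>\<^bsub>N\<^esub> x) = ?g (a \<odot>\<^bsub>N\<^esub> f (?g x))" using gc ax by simp
    also have "\<dots> = ?g (f (a \<odot>\<^bsub>M\<^esub> ?g x))" using lhom_smult[OF assms(1)] gc ax by simp
    also have "\<dots> = a \<odot>\<^bsub>M\<^esub> ?g x" using ax gc by (intro gf) auto
    finally show "?g (a \<odot>\<^bsub>N\<^esub> x) = a \<odot>\<^bsub>M\<^esub> ?g x" .
  qed (use gc in auto)
qed

lemma lhom_eq_if_kernel_vanishes:
  assumes A: "lmod R A" and B: "lmod R B" and X: "lmod R X" and p: "p \<in> lhom R A B"
    and h: "h \<in> lhom R A X" and van: "\<And>x. x \<in> carrier A \<Longrightarrow> p x = \<zero>\<^bsub>B\<^esub> \<Longrightarrow> h x = \<zero>\<^bsub>X\<^esub>"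
    and xy: "x \<in> carrier A" "y \<in> carrier A" "p x = p y"
  shows "h x = h y"
proof -
  interpret A: lmodule R A by (rule lmodule.intro) fact
  interpret B: lmodule R B by (rule lmodule.intro) fact
  interpret X: lmodule R X by (rule lmodule.intro) fact
  have "p (x \<ominus>\<^bsub>A\<^esub> y) = \<zero>\<^bsub>B\<^esub>" using lhom_minus[OF A B p xy(1,2)] xy lhom_closed[OF p]
    by (simp add: B.M.minus_zero_iff)
  hence "h x \<ominus>\<^bsub>X\<^esub> h y = \<zero>\<^bsub>X\<^esub>" using van xy lhom_minus[OF A X h xy(1,2)] by simp
  thus ?thesis using X.M.minus_zero_iff lhom_closed[OF h] xy by blast
qed

lemma lhom_factor_surj:
  assumes A: "lmod R A" and B: "lmod R B" and X: "lmod R X" and p: "p \<in> lhom R A B"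
    and ps: "p ` carrier A = carrier B"
    and h: "h \<in> lhom R A X" and van: "\<And>x. x \<in> carrier A \<Longrightarrow> p x = \<zero>\<^bsub>B\<^esub> \<Longrightarrow> h x = \<zero>\<^bsub>X\<^esub>"
  shows "\<exists>k \<in> lhom R B X. \<forall>x \<in> carrier A. k (p x) = h x"
proof -
  interpret A: lmodule R A by (rule lmodule.intro) fact
  interpret B: lmodule R B by (rule lmodule.intro) fact
  define s where "s = inv_into (carrier A) p"
  have s: "s z \<in> carrier A \<and> p (s z) = z" if "z \<in> carrier B" for z
    using that ps unfolding s_def by (auto simp: inv_into_into f_inv_into_f)
  have eq: "h x = h y" if "x \<in> carrier A" "y \<in> carrier A" "p x = p y" for x y
    by (rule lhom_eq_if_kernel_vanishes[OF A B X p h van that])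
  have "(\<lambda>z. h (s z)) \<in> lhom R B X"
  proof (rule lhomI)
    fix z assume "z \<in> carrier B" thus "h (s z) \<in> carrier X" using s lhom_closed[OF h] by blast
  next
    fix z w assume zw: "z \<in> carrier B" "w \<in> carrier B"
    have sc: "s z \<in> carrier A" "s w \<in> carrier A" using s zw by blast+
    have "p (s (z \<oplus>\<^bsub>B\<^esub> w)) = p (s z \<oplus>\<^bsub>A\<^esub> s w)"
      using lhom_add[OF p sc] s zw B.M.a_closed by simp
    hence "h (s (z \<oplus>\<^bsub>B\<^esub> w)) = h (s z \<oplus>\<^bsub>A\<^esub> s w)"
      using eq s sc zw B.M.a_closed by blast
    thus "h (s (z \<oplus>\<^bsub>B\<^esub> w)) = h (s z) \<oplus>\<^bsub>X\<^esub> h (s w)" using lhom_add[OF h sc] by simp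
  next
    fix a z assume az: "a \<in> carrier R" "z \<in> carrier B"
    have sc: "s z \<in> carrier A" using s az by blast
    have "p (s (a \<odot>\<^bsub>B\<^esub> z)) = p (a \<odot>\<^bsub>A\<^esub> s z)"
      using lhom_smult[OF p az(1) sc] s az B.smult_closed by simp
    hence "h (s (a \<odot>\<^bsub>B\<^esub> z)) = h (a \<odot>\<^bsub>A\<^esub> s z)"
      using eq s sc az B.smult_closed A.smult_closed by blast
    thus "h (s (a \<odot>\<^bsub>B\<^esub> z)) = a \<odot>\<^bsub>X\<^esub> h (s z)" using lhom_smult[OF h az(1) sc] by simp
  qed
  moreover have "\<forall>x \<in> carrier A. h (s (p x)) = h x"
  proof
    fix x assume x: "x \<in> carrier A"
    have "s (p x) \<in> carrier A" "p (s (p x)) = p x" using s lhom_closed[OF p x] by auto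
    thus "h (s (p x)) = h x" using eq x by blast
  qed
  ultimately show ?thesis by (intro bexI[of _ "\<lambda>z. h (s z)"]) simp_all
qed

lemma lhom_factor_inj:
  assumes M: "lmod R M" and i: "i \<in> lhom R M E" and ii: "inj_on i (carrier M)"
    and g: "g \<in> lhom R A E" and gi: "\<And>a. a \<in> carrier A \<Longrightarrow> g a \<in> i ` carrier M"
  shows "(\<lambda>a. inv_into (carrier M) i (g a)) \<in> lhom R A M"
proof -
  interpret M: lmodule R M by (rule lmodule.intro) fact
  let ?iv = "inv_into (carrier M) i"
  have ivc: "?iv y \<in> carrier M" "i (?iv y) = y" if "y \<in> i ` carrier M" for y
    using that by (auto simp: inv_into_into f_inv_into_f)
  have ivi: "?iv (i x) = x" if "x \<in> carrier M" for x using ii that by simp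
  show ?thesis
  proof (rule lhomI)
    fix a assume "a \<in> carrier A" thus "?iv (g a) \<in> carrier M" using ivc gi by blast
  next
    fix a b assume ab: "a \<in> carrier A" "b \<in> carrier A"
    have "g (a \<oplus>\<^bsub>A\<^esub> b) = i (?iv (g a)) \<oplus>\<^bsub>E\<^esub> i (?iv (g b))" using lhom_add[OF g ab] ivc gi ab by simp
    also have "\<dots> = i (?iv (g a) \<oplus>\<^bsub>M\<^esub> ?iv (g b))" using lhom_add[OF i] ivc gi ab by simp
    finally show "?iv (g (a \<oplus>\<^bsub>A\<^esub> b)) = ?iv (g a) \<oplus>\<^bsub>M\<^esub> ?iv (g b)"
      using ivi ivc gi ab by simp
  next
    fix r a assume ra: "r \<in> carrier R" "a \<in> carrier A"
    have "g (r \<odot>\<^bsub>A\<^esub> a) = r \<odot>\<^bsub>E\<^esub> i (?iv (g a))" using lhom_smult[OF g ra] ivc gi ra by simp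
    also have "\<dots> = i (r \<odot>\<^bsub>M\<^esub> ?iv (g a))" using lhom_smult[OF i] ivc gi ra by simp
    finally show "?iv (g (r \<odot>\<^bsub>A\<^esub> a)) = r \<odot>\<^bsub>M\<^esub> ?iv (g a)"
      using ivi ivc gi ra by simp
  qed
qed

section \<open>Submodules and spans\<close>

lemma lsubmod_subset: "lsubmod R M S \<Longrightarrow> S \<subseteq> carrier M" by (simp add: lsubmod_def)
lemma lsubmod_zero: "lsubmod R M S \<Longrightarrow> \<zero>\<^bsub>M\<^esub> \<in> S" by (simp add: lsubmod_def)
lemma lsubmod_add: "lsubmod R M S \<Longrightarrow> x \<in> S \<Longrightarrow> y \<in> S \<Longrightarrow> x \<oplus>\<^bsub>M\<^esub> y \<in> S" by (simp add: lsubmod_def)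
lemma lsubmod_smult: "lsubmod R M S \<Longrightarrow> a \<in> carrier R \<Longrightarrow> x \<in> S \<Longrightarrow> a \<odot>\<^bsub>M\<^esub> x \<in> S" by (simp add: lsubmod_def)

lemma lsubmod_neg: "lmod R M \<Longrightarrow> lsubmod R M S \<Longrightarrow> x \<in> S \<Longrightarrow> \<ominus>\<^bsub>M\<^esub> x \<in> S"
proof -
  assume a: "lmod R M" "lsubmod R M S" "x \<in> S"
  interpret lmodule R M by (rule lmodule.intro) fact
  have "x \<in> carrier M" using a lsubmod_subset by blast
  hence "\<ominus>\<^bsub>M\<^esub> x = (\<ominus>\<^bsub>R\<^esub> \<one>\<^bsub>R\<^esub>) \<odot>\<^bsub>M\<^esub> x" by (simp add: neg_smult)
  thus ?thesis using lsubmod_smult[of R M S "\<ominus>\<^bsub>R\<^esub> \<one>\<^bsub>R\<^esub>" x] a by simp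
qed

lemma lsubmod_minus: "lmod R M \<Longrightarrow> lsubmod R M S \<Longrightarrow> x \<in> S \<Longrightarrow> y \<in> S \<Longrightarrow> x \<ominus>\<^bsub>M\<^esub> y \<in> S"
  by (simp add: a_minus_def lsubmod_add lsubmod_neg)

lemma lsubmod_lmod:
  assumes "lmod R M" "lsubmod R M S"
  shows "lmod R (M\<lparr>carrier := S\<rparr>)"
proof -
  interpret lmodule R M by (rule lmodule.intro) fact
  have sub: "S \<subseteq> carrier M" using assms(2) by (simp add: lsubmod_def)
  have "abelian_group (M\<lparr>carrier := S\<rparr>)"
  proof (rule abelian_groupI)
    fix x assume "x \<in> carrier (M\<lparr>carrier := S\<rparr>)"
    hence x: "x \<in> S" by simp
    show "\<exists>y\<in>carrier (M\<lparr>carrier := S\<rparr>). y \<oplus>\<^bsub>M\<lparr>carrier := S\<rparr>\<^esub> x = \<zero>\<^bsub>M\<lparr>carrier := S\<rparr>\<^esub>"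
      using lsubmod_neg[OF assms x] x sub by (intro bexI[of _ "\<ominus>\<^bsub>M\<^esub> x"]) (auto simp: M.l_neg)
  qed (use sub assms(2) in \<open>auto simp: lsubmod_def subset_iff M.a_ac\<close>)
  thus ?thesis using lm sub assms(2) unfolding lmod_def lsubmod_def by (auto simp: subset_iff)
qed

lemma lsubmod_carrier: "lmod R M \<Longrightarrow> lsubmod R M (carrier M)"
proof -
  assume "lmod R M"
  then interpret lmodule R M by (rule lmodule.intro)
  show ?thesis unfolding lsubmod_def by auto
qed

lemma lsubmod_zero_set: "lmod R M \<Longrightarrow> lsubmod R M {\<zero>\<^bsub>M\<^esub>}"
proof -
  assume "lmod R M"
  then interpret lmodule R M by (rule lmodule.intro)
  show ?thesis unfolding lsubmod_def by auto
qed

lemma lsubmod_kernel: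
  assumes "lmod R M" "lmod R N" "f \<in> lhom R M N"
  shows "lsubmod R M {x \<in> carrier M. f x = \<zero>\<^bsub>N\<^esub>}"
proof -
  interpret M: lmodule R M by (rule lmodule.intro) fact
  interpret N: lmodule R N by (rule lmodule.intro) fact
  show ?thesis using lhom_zero[OF assms] lhom_add[OF assms(3)] lhom_smult[OF assms(3)]
    unfolding lsubmod_def by auto
qed

lemma lsubmod_image:
  assumes "lmod R M" "lmod R N" "f \<in> lhom R M N" "lsubmod R M S"
  shows "lsubmod R N (f ` S)"
proof -
  interpret M: lmodule R M by (rule lmodule.intro) fact
  interpret N: lmodule R N by (rule lmodule.intro) fact
  have sub: "S \<subseteq> carrier M" using assms(4) by (simp add: lsubmod_def)
  show ?thesis unfolding lsubmod_def
  proof (intro conjI ballI)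
    show "f ` S \<subseteq> carrier N" using sub lhom_closed[OF assms(3)] by auto
    show "\<zero>\<^bsub>N\<^esub> \<in> f ` S" using lhom_zero[OF assms(1-3)] lsubmod_zero[OF assms(4)] by force
    fix x y assume "x \<in> f ` S" "y \<in> f ` S"
    then obtain u v where uv: "u \<in> S" "v \<in> S" "x = f u" "y = f v" by auto
    hence "x \<oplus>\<^bsub>N\<^esub> y = f (u \<oplus>\<^bsub>M\<^esub> v)" using lhom_add[OF assms(3), of u v] sub by (auto simp: subset_iff)
    thus "x \<oplus>\<^bsub>N\<^esub> y \<in> f ` S" using lsubmod_add[OF assms(4) uv(1,2)] by simp
  next
    fix a x assume a: "a \<in> carrier R" and "x \<in> f ` S"
    then obtain u where u: "u \<in> S" "x = f u" by auto
    hence "a \<odot>\<^bsub>N\<^esub> x = f (a \<odot>\<^bsub>M\<^esub> u)" using lhom_smult[OF assms(3) a, of u] sub by (auto simp: subset_iff)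
    thus "a \<odot>\<^bsub>N\<^esub> x \<in> f ` S" using lsubmod_smult[OF assms(4) a u(1)] by simp
  qed
qed

lemma lsubmod_preimage:
  assumes "lmod R M" "lmod R N" "f \<in> lhom R M N" "lsubmod R N T"
  shows "lsubmod R M {x \<in> carrier M. f x \<in> T}"
proof -
  interpret M: lmodule R M by (rule lmodule.intro) fact
  interpret N: lmodule R N by (rule lmodule.intro) fact
  show ?thesis using lhom_zero[OF assms(1-3)] lhom_add[OF assms(3)] lhom_smult[OF assms(3)] assms(4)
    unfolding lsubmod_def by auto
qed

lemma lsubmod_Int: "lsubmod R M S \<Longrightarrow> lsubmod R M T \<Longrightarrow> lsubmod R M (S \<inter> T)"
  unfolding lsubmod_def by auto

lemma lsubmod_add_image:
  assumes "lmod R M" "lmod R F" "w \<in> lhom R F M" "lsubmod R M H"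
  shows "lsubmod R M {h \<oplus>\<^bsub>M\<^esub> w u | h u. h \<in> H \<and> u \<in> carrier F}"
proof -
  interpret M: lmodule R M by (rule lmodule.intro) fact
  interpret F: lmodule R F by (rule lmodule.intro) fact
  note H = lsubmod_subset[OF assms(4)] lsubmod_zero[OF assms(4)] lsubmod_add[OF assms(4)]
    lsubmod_smult[OF assms(4)]
  note w = lhom_closed[OF assms(3)] lhom_add[OF assms(3)] lhom_smult[OF assms(3)] lhom_zero[OF assms(2,1,3)]
  show ?thesis unfolding lsubmod_def
  proof (intro conjI ballI)
    show "{h \<oplus>\<^bsub>M\<^esub> w u | h u. h \<in> H \<and> u \<in> carrier F} \<subseteq> carrier M" using H w by auto
    have "\<zero>\<^bsub>M\<^esub> = \<zero>\<^bsub>M\<^esub> \<oplus>\<^bsub>M\<^esub> w \<zero>\<^bsub>F\<^esub>" using w by simp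
    thus "\<zero>\<^bsub>M\<^esub> \<in> {h \<oplus>\<^bsub>M\<^esub> w u | h u. h \<in> H \<and> u \<in> carrier F}" using H by blast
  next
    fix x y assume "x \<in> {h \<oplus>\<^bsub>M\<^esub> w u | h u. h \<in> H \<and> u \<in> carrier F}"
      "y \<in> {h \<oplus>\<^bsub>M\<^esub> w u | h u. h \<in> H \<and> u \<in> carrier F}"
    then obtain h u h' u' where hu: "h \<in> H" "u \<in> carrier F" "h' \<in> H" "u' \<in> carrier F"
      and xy: "x = h \<oplus>\<^bsub>M\<^esub> w u" "y = h' \<oplus>\<^bsub>M\<^esub> w u'" by blast
    have "x \<oplus>\<^bsub>M\<^esub> y = (h \<oplus>\<^bsub>M\<^esub> h') \<oplus>\<^bsub>M\<^esub> w (u \<oplus>\<^bsub>F\<^esub> u')"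
    proof -
      have "h \<in> carrier M" "h' \<in> carrier M" "w u \<in> carrier M" "w u' \<in> carrier M"
        using hu H(1) w(1) by auto
      thus ?thesis using hu w(2) unfolding xy by (simp add: M.M.a_ac)
    qed
    thus "x \<oplus>\<^bsub>M\<^esub> y \<in> {h \<oplus>\<^bsub>M\<^esub> w u | h u. h \<in> H \<and> u \<in> carrier F}" using hu H by blast
  next
    fix a x assume a: "a \<in> carrier R" and "x \<in> {h \<oplus>\<^bsub>M\<^esub> w u | h u. h \<in> H \<and> u \<in> carrier F}"
    then obtain h u where hu: "h \<in> H" "u \<in> carrier F" and x: "x = h \<oplus>\<^bsub>M\<^esub> w u" by blast
    have "a \<odot>\<^bsub>M\<^esub> x = a \<odot>\<^bsub>M\<^esub> h \<oplus>\<^bsub>M\<^esub> w (a \<odot>\<^bsub>F\<^esub> u)"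
      using a hu H(1) w(1,3) unfolding x by (auto simp: M.smult_add)
    thus "a \<odot>\<^bsub>M\<^esub> x \<in> {h \<oplus>\<^bsub>M\<^esub> w u | h u. h \<in> H \<and> u \<in> carrier F}" using a hu H by blast
  qed
qed

definition lspan :: "'a ring \<Rightarrow> ('a,'m) module \<Rightarrow> 'm set \<Rightarrow> 'm set" where
  "lspan R M X = {x \<in> carrier M. \<forall>T. lsubmod R M T \<and> X \<subseteq> T \<longrightarrow> x \<in> T}"

lemma lspan_subset_carrier: "lspan R M X \<subseteq> carrier M"
  by (auto simp: lspan_def)

lemma lspan_superset: "X \<subseteq> carrier M \<Longrightarrow> X \<subseteq> lspan R M X"
  unfolding lspan_def by blast

lemma lspan_minimal: "lsubmod R M T \<Longrightarrow> X \<subseteq> T \<Longrightarrow> lspan R M X \<subseteq> T"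
  unfolding lspan_def by blast

lemma lspan_lsubmod: "lmod R M \<Longrightarrow> lsubmod R M (lspan R M X)"
proof -
  assume "lmod R M"
  then interpret lmodule R M by (rule lmodule.intro)
  show ?thesis unfolding lspan_def lsubmod_def by auto
qed

lemma lspan_mono: "X \<subseteq> Y \<Longrightarrow> lspan R M X \<subseteq> lspan R M Y"
  unfolding lspan_def by blast

lemma lspan_empty: "lmod R M \<Longrightarrow> lspan R M {} = {\<zero>\<^bsub>M\<^esub>}"
  using lspan_minimal[OF lsubmod_zero_set, of R M "{}"] lsubmod_zero[OF lspan_lsubmod, of R M "{}"] by auto

lemma lfingen_iff_lspan:
  assumes lm: "lmod R M"
  shows "lfingen R M S \<longleftrightarrow> (\<exists>X. finite X \<and> X \<subseteq> carrier M \<and> S = lspan R M X)"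
proof
  assume "lfingen R M S"
  then obtain X where X: "finite X" "X \<subseteq> S" "\<forall>T. lsubmod R M T \<and> X \<subseteq> T \<longrightarrow> S \<subseteq> T"
    and s: "lsubmod R M S" by (auto simp: lfingen_def)
  have Xc: "X \<subseteq> carrier M" using X(2) lsubmod_subset[OF s] by blast
  have "S \<subseteq> lspan R M X" using X(3) lspan_lsubmod[OF lm, of X] lspan_superset[OF Xc] by blast
  moreover have "lspan R M X \<subseteq> S" by (rule lspan_minimal[OF s X(2)])
  ultimately show "\<exists>X. finite X \<and> X \<subseteq> carrier M \<and> S = lspan R M X" using X(1) Xc by blast
next
  assume "\<exists>X. finite X \<and> X \<subseteq> carrier M \<and> S = lspan R M X"
  then obtain X where X: "finite X" "X \<subseteq> carrier M" "S = lspan R M X" by blast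
  have "lsubmod R M S" "X \<subseteq> S" "\<forall>T. lsubmod R M T \<and> X \<subseteq> T \<longrightarrow> S \<subseteq> T"
    using X(3) lspan_lsubmod[OF lm] lspan_superset[OF X(2)] lspan_minimal[of R M _ X] by auto
  thus "lfingen R M S" unfolding lfingen_def using X(1) by blast
qed

lemma lfingen_lspan: "lmod R M \<Longrightarrow> finite X \<Longrightarrow> X \<subseteq> carrier M \<Longrightarrow> lfingen R M (lspan R M X)"
  by (subst lfingen_iff_lspan) auto

lemma lspan_image:
  assumes "lmod R M" "lmod R N" "f \<in> lhom R M N" "X \<subseteq> carrier M"
  shows "f ` lspan R M X = lspan R N (f ` X)"
proof
  have fX: "f ` X \<subseteq> carrier N" using assms(4) lhom_closed[OF assms(3)] by auto
  have "lsubmod R M {x \<in> carrier M. f x \<in> lspan R N (f ` X)}"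
    by (rule lsubmod_preimage[OF assms(1-3) lspan_lsubmod[OF assms(2)]])
  moreover have "X \<subseteq> {x \<in> carrier M. f x \<in> lspan R N (f ` X)}"
    using assms(4) lspan_superset[OF fX] by auto
  ultimately have "lspan R M X \<subseteq> {x \<in> carrier M. f x \<in> lspan R N (f ` X)}" by (rule lspan_minimal)
  thus "f ` lspan R M X \<subseteq> lspan R N (f ` X)" by auto
  have "lsubmod R N (f ` lspan R M X)" by (rule lsubmod_image[OF assms(1-3) lspan_lsubmod[OF assms(1)]])
  moreover have "f ` X \<subseteq> f ` lspan R M X" using lspan_superset[OF assms(4)] by auto
  ultimately show "lspan R N (f ` X) \<subseteq> f ` lspan R M X" by (rule lspan_minimal)
qed

lemma lfingen_image:
  assumes "lmod R M" "lmod R N" "f \<in> lhom R M N" "lfingen R M S"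
  shows "lfingen R N (f ` S)"
proof -
  obtain X where X: "finite X" "X \<subseteq> carrier M" "S = lspan R M X"
    using assms(4) unfolding lfingen_iff_lspan[OF assms(1)] by blast
  have "f ` X \<subseteq> carrier N" using X(2) lhom_closed[OF assms(3)] by auto
  thus ?thesis using lfingen_lspan[OF assms(2) finite_imageI[OF X(1)]] X(3) lspan_image[OF assms(1-3) X(2)]
    by simp
qed

lemma lhom_eq_on_lspan:
  assumes "lmod R M" "lmod R N" "f \<in> lhom R M N" "g \<in> lhom R M N" "\<And>x. x \<in> X \<Longrightarrow> f x = g x"
    "X \<subseteq> carrier M" "x \<in> lspan R M X"
  shows "f x = g x"
proof -
  interpret N: lmodule R N by (rule lmodule.intro) fact
  let ?E = "{x \<in> carrier M. f x \<ominus>\<^bsub>N\<^esub> g x = \<zero>\<^bsub>N\<^esub>}"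
  have "lsubmod R M ?E"
    by (rule lsubmod_kernel[OF assms(1,2) lhom_minus_map[OF assms(2-4)]])
  moreover have "X \<subseteq> ?E"
    using assms(5,6) lhom_closed[OF assms(4)] by (auto simp: N.M.r_neg N.M.minus_eq)
  ultimately have "x \<in> ?E" using assms(7) lspan_minimal by blast
  thus ?thesis using lhom_closed[OF assms(3)] lhom_closed[OF assms(4)] N.M.minus_zero_iff by blast
qed

section \<open>Quotients, direct sums and transport of structure\<close>

definition lcoset :: "('a,'m) module \<Rightarrow> 'm set \<Rightarrow> 'm \<Rightarrow> 'm set" where
  "lcoset M S x = {y \<in> carrier M. y \<ominus>\<^bsub>M\<^esub> x \<in> S}"

definition quotmod :: "('a,'m) module \<Rightarrow> 'm set \<Rightarrow> ('a, 'm set) module" where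
  "quotmod M S = \<lparr>carrier = lcoset M S ` carrier M, mult = (\<lambda>A B. undefined), one = undefined,
     zero = lcoset M S \<zero>\<^bsub>M\<^esub>,
     add = (\<lambda>A B. \<Union>x\<in>A. \<Union>y\<in>B. lcoset M S (x \<oplus>\<^bsub>M\<^esub> y)),
     smult = (\<lambda>a A. \<Union>x\<in>A. lcoset M S (a \<odot>\<^bsub>M\<^esub> x))\<rparr>"

locale lquotient = lmodule R M for R :: "'a ring" and M :: "('a,'m) module" +
  fixes S assumes S: "lsubmod R M S"
begin

lemma lcoset_self: "x \<in> carrier M \<Longrightarrow> x \<in> lcoset M S x"
  using S by (simp add: lcoset_def M.r_neg M.minus_eq lsubmod_def)

lemma lcoset_eq: "x \<in> carrier M \<Longrightarrow> y \<in> carrier M \<Longrightarrow> lcoset M S x = lcoset M S y \<longleftrightarrow> x \<ominus>\<^bsub>M\<^esub> y \<in> S"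
proof
  assume xy: "x \<in> carrier M" "y \<in> carrier M"
  {
    assume "lcoset M S x = lcoset M S y"
    thus "x \<ominus>\<^bsub>M\<^esub> y \<in> S" using lcoset_self[OF xy(1)] by (auto simp: lcoset_def)
  }
  assume d: "x \<ominus>\<^bsub>M\<^esub> y \<in> S"
  show "lcoset M S x = lcoset M S y"
  proof (auto simp: lcoset_def)
    fix z assume z: "z \<in> carrier M" "z \<ominus>\<^bsub>M\<^esub> x \<in> S"
    have "z \<ominus>\<^bsub>M\<^esub> y = (z \<ominus>\<^bsub>M\<^esub> x) \<oplus>\<^bsub>M\<^esub> (x \<ominus>\<^bsub>M\<^esub> y)" using z xy by (simp add: M.a_cancel_simps)
    thus "z \<ominus>\<^bsub>M\<^esub> y \<in> S" using lsubmod_add[OF S z(2) d] by simp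
  next
    fix z assume z: "z \<in> carrier M" "z \<ominus>\<^bsub>M\<^esub> y \<in> S"
    have "z \<ominus>\<^bsub>M\<^esub> x = (z \<ominus>\<^bsub>M\<^esub> y) \<ominus>\<^bsub>M\<^esub> (x \<ominus>\<^bsub>M\<^esub> y)" using z xy by (simp add: M.a_cancel_simps)
    thus "z \<ominus>\<^bsub>M\<^esub> x \<in> S" using lsubmod_minus[OF lm S z(2) d] by simp
  qed
qed

lemma lcoset_Union:
  assumes "x0 \<in> carrier M"
    and "\<And>x. x \<in> lcoset M S x0 \<Longrightarrow> f x \<in> carrier M \<and> f x \<ominus>\<^bsub>M\<^esub> f x0 \<in> S"
  shows "(\<Union>x\<in>lcoset M S x0. lcoset M S (f x)) = lcoset M S (f x0)"
proof -
  have "f x0 \<in> carrier M" using assms lcoset_self by blast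
  hence "lcoset M S (f x) = lcoset M S (f x0)" if "x \<in> lcoset M S x0" for x
    using assms(2)[OF that] lcoset_eq by blast
  thus ?thesis using lcoset_self[OF assms(1)] by blast
qed

lemma quotmod_carrier[simp]: "carrier (quotmod M S) = lcoset M S ` carrier M"
  by (simp add: quotmod_def)

lemma quotmod_zero[simp]: "\<zero>\<^bsub>quotmod M S\<^esub> = lcoset M S \<zero>\<^bsub>M\<^esub>"
  by (simp add: quotmod_def)

lemma quotmod_add:
  assumes "x \<in> carrier M" "y \<in> carrier M"
  shows "lcoset M S x \<oplus>\<^bsub>quotmod M S\<^esub> lcoset M S y = lcoset M S (x \<oplus>\<^bsub>M\<^esub> y)"
proof -
  have "(\<Union>u\<in>lcoset M S x. \<Union>v\<in>lcoset M S y. lcoset M S (u \<oplus>\<^bsub>M\<^esub> v))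
      = (\<Union>u\<in>lcoset M S x. lcoset M S (u \<oplus>\<^bsub>M\<^esub> y))"
  proof (rule SUP_cong[OF refl])
    fix u assume "u \<in> lcoset M S x"
    hence u: "u \<in> carrier M" by (simp add: lcoset_def)
    show "(\<Union>v\<in>lcoset M S y. lcoset M S (u \<oplus>\<^bsub>M\<^esub> v)) = lcoset M S (u \<oplus>\<^bsub>M\<^esub> y)"
      by (rule lcoset_Union[OF assms(2)]) (use u assms in \<open>auto simp: lcoset_def M.a_cancel_simps\<close>)
  qed
  also have "\<dots> = lcoset M S (x \<oplus>\<^bsub>M\<^esub> y)"
    by (rule lcoset_Union[OF assms(1)]) (use assms in \<open>auto simp: lcoset_def M.a_cancel_simps\<close>)
  finally show ?thesis by (simp add: quotmod_def)
qed

lemma quotmod_smult: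
  assumes "a \<in> carrier R" "x \<in> carrier M"
  shows "a \<odot>\<^bsub>quotmod M S\<^esub> lcoset M S x = lcoset M S (a \<odot>\<^bsub>M\<^esub> x)"
proof -
  have "(\<Union>u\<in>lcoset M S x. lcoset M S (a \<odot>\<^bsub>M\<^esub> u)) = lcoset M S (a \<odot>\<^bsub>M\<^esub> x)"
    by (rule lcoset_Union[OF assms(2)])
      (use assms lsubmod_smult[OF S] in \<open>auto simp: lcoset_def smult_minus[symmetric]\<close>)
  thus ?thesis by (simp add: quotmod_def)
qed

lemma quotmod_lmod: "lmod R (quotmod M S)"
proof -
  have "abelian_group (quotmod M S)"
  proof (rule abelian_groupI)
    fix A assume "A \<in> carrier (quotmod M S)"
    then obtain x where "x \<in> carrier M" "A = lcoset M S x" by auto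
    thus "\<exists>B\<in>carrier (quotmod M S). B \<oplus>\<^bsub>quotmod M S\<^esub> A = \<zero>\<^bsub>quotmod M S\<^esub>"
      by (intro bexI[of _ "lcoset M S (\<ominus>\<^bsub>M\<^esub> x)"]) (auto simp: quotmod_add M.l_neg)
  qed (auto simp: quotmod_add M.a_ac)
  thus ?thesis unfolding lmod_def using R.ring_axioms
    by (auto simp: quotmod_add quotmod_smult smult_add add_smult mult_smult)
qed

lemma lcoset_lhom: "lcoset M S \<in> lhom R M (quotmod M S)"
  by (rule lhomI) (auto simp: quotmod_add quotmod_smult)

lemma lcoset_eq_zero_iff: "x \<in> carrier M \<Longrightarrow> lcoset M S x = \<zero>\<^bsub>quotmod M S\<^esub> \<longleftrightarrow> x \<in> S"
  using lcoset_eq[of x "\<zero>\<^bsub>M\<^esub>"] by (simp add: M.minus_eq)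

end

definition dirsum :: "('a,'m) module \<Rightarrow> ('a,'n) module \<Rightarrow> ('a, 'm \<times> 'n) module" where
  "dirsum M N = \<lparr>carrier = carrier M \<times> carrier N, mult = (\<lambda>a b. undefined), one = undefined,
     zero = (\<zero>\<^bsub>M\<^esub>, \<zero>\<^bsub>N\<^esub>),
     add = (\<lambda>a b. (fst a \<oplus>\<^bsub>M\<^esub> fst b, snd a \<oplus>\<^bsub>N\<^esub> snd b)),
     smult = (\<lambda>r a. (r \<odot>\<^bsub>M\<^esub> fst a, r \<odot>\<^bsub>N\<^esub> snd a))\<rparr>"

lemma dirsum_simps[simp]:
  "carrier (dirsum M N) = carrier M \<times> carrier N" "\<zero>\<^bsub>dirsum M N\<^esub> = (\<zero>\<^bsub>M\<^esub>, \<zero>\<^bsub>N\<^esub>)"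
  "(a, b) \<oplus>\<^bsub>dirsum M N\<^esub> (c, d) = (a \<oplus>\<^bsub>M\<^esub> c, b \<oplus>\<^bsub>N\<^esub> d)"
  "r \<odot>\<^bsub>dirsum M N\<^esub> (a, b) = (r \<odot>\<^bsub>M\<^esub> a, r \<odot>\<^bsub>N\<^esub> b)"
  by (simp_all add: dirsum_def)

lemma dirsum_lmod:
  assumes M: "lmod R M" and N: "lmod R N"
  shows "lmod R (dirsum M N)"
proof -
  interpret M: lmodule R M by (rule lmodule.intro) fact
  interpret N: lmodule R N by (rule lmodule.intro) fact
  have ag: "abelian_group (dirsum M N)"
  proof (rule abelian_groupI)
    fix x assume "x \<in> carrier (dirsum M N)"
    then obtain a b where x: "x = (a, b)" "a \<in> carrier M" "b \<in> carrier N" by auto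
    show "\<exists>y\<in>carrier (dirsum M N). y \<oplus>\<^bsub>dirsum M N\<^esub> x = \<zero>\<^bsub>dirsum M N\<^esub>"
      using x by (intro bexI[of _ "(\<ominus>\<^bsub>M\<^esub> a, \<ominus>\<^bsub>N\<^esub> b)"]) (auto simp: M.M.l_neg N.M.l_neg)
  qed (auto simp: M.M.a_ac N.M.a_ac)
  show ?thesis unfolding lmod_def using ag M.R.ring_axioms
    by (auto simp: M.smult_add N.smult_add M.add_smult N.add_smult M.mult_smult N.mult_smult)
qed

lemma dirsum_minus:
  assumes M: "lmod R M" and N: "lmod R N"
    and "a \<in> carrier M" "b \<in> carrier N" "c \<in> carrier M" "d \<in> carrier N"
  shows "(a, b) \<ominus>\<^bsub>dirsum M N\<^esub> (c, d) = (a \<ominus>\<^bsub>M\<^esub> c, b \<ominus>\<^bsub>N\<^esub> d)"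
proof -
  interpret M: lmodule R M by (rule lmodule.intro) fact
  interpret N: lmodule R N by (rule lmodule.intro) fact
  interpret P: lmodule R "dirsum M N" by (rule lmodule.intro) (rule dirsum_lmod[OF M N])
  have "\<ominus>\<^bsub>dirsum M N\<^esub> (c, d) = (\<ominus>\<^bsub>M\<^esub> c, \<ominus>\<^bsub>N\<^esub> d)"
    by (rule P.M.minus_equality) (use assms in \<open>auto simp: M.M.l_neg N.M.l_neg\<close>)
  thus ?thesis using assms by (simp add: P.M.minus_eq M.M.minus_eq N.M.minus_eq)
qed

lemma dirsum_fst_lhom: "fst \<in> lhom R (dirsum M N) M"
  by (rule lhomI) auto

lemma dirsum_snd_lhom: "snd \<in> lhom R (dirsum M N) N"
  by (rule lhomI) auto

definition transport_lmod :: "('a,'e) module \<Rightarrow> ('e \<Rightarrow> 'z) \<Rightarrow> ('a,'z) module" where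
  "transport_lmod E j = \<lparr>carrier = j ` carrier E, mult = (\<lambda>a b. undefined), one = undefined,
     zero = j \<zero>\<^bsub>E\<^esub>,
     add = (\<lambda>a b. j (inv_into (carrier E) j a \<oplus>\<^bsub>E\<^esub> inv_into (carrier E) j b)),
     smult = (\<lambda>r a. j (r \<odot>\<^bsub>E\<^esub> inv_into (carrier E) j a))\<rparr>"

lemma transport_lmod_simps:
  "carrier (transport_lmod E j) = j ` carrier E" "\<zero>\<^bsub>transport_lmod E j\<^esub> = j \<zero>\<^bsub>E\<^esub>"
  "a \<oplus>\<^bsub>transport_lmod E j\<^esub> b = j (inv_into (carrier E) j a \<oplus>\<^bsub>E\<^esub> inv_into (carrier E) j b)"
  "r \<odot>\<^bsub>transport_lmod E j\<^esub> a = j (r \<odot>\<^bsub>E\<^esub> inv_into (carrier E) j a)"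
  by (simp_all add: transport_lmod_def)

context
  fixes R :: "'a ring" and E :: "('a,'e) module" and j :: "'e \<Rightarrow> 'z"
  assumes E: "lmod R E" and j: "inj_on j (carrier E)"
begin

interpretation E: lmodule R E by (rule lmodule.intro) (rule E)

private abbreviation "T \<equiv> transport_lmod E j"
private abbreviation "k \<equiv> inv_into (carrier E) j"

private lemma inv_j[simp]: "x \<in> carrier E \<Longrightarrow> k (j x) = x"
  using j by simp

private lemma transport_carrierE: "a \<in> carrier T \<Longrightarrow> (\<And>x. x \<in> carrier E \<Longrightarrow> a = j x \<Longrightarrow> P) \<Longrightarrow> P"
  by (auto simp: transport_lmod_simps)

lemma transport_lmod_abelian_group: "abelian_group T"
proof (rule abelian_groupI)
  fix a b c assume "a \<in> carrier T" "b \<in> carrier T" "c \<in> carrier T"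
  then obtain x y z where "x \<in> carrier E" "y \<in> carrier E" "z \<in> carrier E" "a = j x" "b = j y" "c = j z"
    by (metis transport_carrierE)
  thus "a \<oplus>\<^bsub>T\<^esub> b \<in> carrier T" "a \<oplus>\<^bsub>T\<^esub> b = b \<oplus>\<^bsub>T\<^esub> a"
    "a \<oplus>\<^bsub>T\<^esub> b \<oplus>\<^bsub>T\<^esub> c = a \<oplus>\<^bsub>T\<^esub> (b \<oplus>\<^bsub>T\<^esub> c)" "\<zero>\<^bsub>T\<^esub> \<oplus>\<^bsub>T\<^esub> a = a"
    by (auto simp: transport_lmod_simps E.M.a_ac)
  show "\<exists>b'\<in>carrier T. b' \<oplus>\<^bsub>T\<^esub> a = \<zero>\<^bsub>T\<^esub>"
    using \<open>x \<in> carrier E\<close> \<open>a = j x\<close>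
    by (intro bexI[of _ "j (\<ominus>\<^bsub>E\<^esub> x)"]) (auto simp: transport_lmod_simps E.M.l_neg)
qed (simp add: transport_lmod_simps)

lemma transport_lmod_lmod: "lmod R T"
  unfolding lmod_def using E.R.ring_axioms transport_lmod_abelian_group
  by (simp add: transport_lmod_simps E.smult_add E.add_smult E.mult_smult)

lemma transport_lmod_lhom: "j \<in> lhom R E T"
  by (rule lhomI) (auto simp: transport_lmod_simps)

lemma transport_lmod_inv_lhom: "k \<in> lhom R T E"
  by (rule lhomI) (auto simp: transport_lmod_simps)

end

section \<open>Finite sums and free modules\<close>

primrec lsum :: "('m,'x) ring_scheme \<Rightarrow> (nat \<Rightarrow> 'm) \<Rightarrow> nat \<Rightarrow> 'm" where
  "lsum X f 0 = \<zero>\<^bsub>X\<^esub>"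
| "lsum X f (Suc n) = lsum X f n \<oplus>\<^bsub>X\<^esub> f n"

context abelian_group
begin

lemma lsum_closed: "(\<And>i. i < n \<Longrightarrow> f i \<in> carrier G) \<Longrightarrow> lsum G f n \<in> carrier G"
  by (induction n) auto

lemma lsum_cong: "(\<And>i. i < n \<Longrightarrow> f i = g i) \<Longrightarrow> lsum G f n = lsum G g n"
  by (induction n) auto

lemma lsum_add: "(\<And>i. i < n \<Longrightarrow> f i \<in> carrier G) \<Longrightarrow> (\<And>i. i < n \<Longrightarrow> g i \<in> carrier G) \<Longrightarrow>
   lsum G (\<lambda>i. f i \<oplus> g i) n = lsum G f n \<oplus> lsum G g n"
proof (induction n)
  case (Suc n)
  have "lsum G f n \<in> carrier G" "lsum G g n \<in> carrier G" "f n \<in> carrier G" "g n \<in> carrier G"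
    using Suc.prems by (auto intro!: lsum_closed)
  thus ?case using Suc by (simp add: a_ac)
qed simp

lemma lsum_zero: "(\<And>i. i < n \<Longrightarrow> f i = \<zero>) \<Longrightarrow> lsum G f n = \<zero>"
  by (induction n) auto

lemma lsum_single:
  "k < n \<Longrightarrow> (\<And>i. i < n \<Longrightarrow> i \<noteq> k \<Longrightarrow> f i = \<zero>) \<Longrightarrow> f k \<in> carrier G \<Longrightarrow> lsum G f n = f k"
proof (induction n)
  case (Suc n)
  show ?case
  proof (cases "k = n")
    case True
    hence "lsum G f n = \<zero>" using Suc.prems by (intro lsum_zero) auto
    thus ?thesis using True Suc.prems by simp
  next
    case False
    thus ?thesis using Suc by auto
  qed
qed simp

end

lemma lsum_in_lsubmod: "lsubmod R M T \<Longrightarrow> (\<And>i. i < n \<Longrightarrow> f i \<in> T) \<Longrightarrow> lsum M f n \<in> T"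
  by (induction n) (auto simp: lsubmod_def)

lemma (in lmodule) lsum_smult: "a \<in> carrier R \<Longrightarrow> (\<And>i. i < n \<Longrightarrow> f i \<in> carrier M) \<Longrightarrow>
   a \<odot>\<^bsub>M\<^esub> lsum M f n = lsum M (\<lambda>i. a \<odot>\<^bsub>M\<^esub> f i) n"
proof (induction n)
  case (Suc n)
  have "lsum M f n \<in> carrier M" using Suc.prems by (intro M.lsum_closed) auto
  thus ?case using Suc by (simp add: smult_add)
qed simp

lemma freemod_simps:
  "carrier (freemod R n) = {v. (\<forall>i. v i \<in> carrier R) \<and> (\<forall>i\<ge>n. v i = \<zero>\<^bsub>R\<^esub>)}"
  "\<zero>\<^bsub>freemod R n\<^esub> = (\<lambda>i. \<zero>\<^bsub>R\<^esub>)"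
  "v \<oplus>\<^bsub>freemod R n\<^esub> w = (\<lambda>i. v i \<oplus>\<^bsub>R\<^esub> w i)"
  "a \<odot>\<^bsub>freemod R n\<^esub> v = (\<lambda>i. a \<otimes>\<^bsub>R\<^esub> v i)"
  by (simp_all add: freemod_def)

lemma freemod_lmod: "ring R \<Longrightarrow> lmod R (freemod R n)"
proof -
  assume "ring R"
  then interpret R: ring R .
  have "abelian_group (freemod R n)"
  proof (rule abelian_groupI)
    fix v assume "v \<in> carrier (freemod R n)"
    thus "\<exists>w\<in>carrier (freemod R n). w \<oplus>\<^bsub>freemod R n\<^esub> v = \<zero>\<^bsub>freemod R n\<^esub>"
      by (intro bexI[of _ "\<lambda>i. \<ominus>\<^bsub>R\<^esub> v i"]) (auto simp: freemod_simps R.l_neg)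
  qed (auto simp: freemod_simps R.a_ac)
  thus ?thesis unfolding lmod_def
    by (auto simp: freemod_simps R.r_distr R.l_distr R.m_assoc \<open>ring R\<close>)
qed

lemma ring_lmod_simps[simp]:
  "carrier (ring_lmod R) = carrier R" "\<zero>\<^bsub>ring_lmod R\<^esub> = \<zero>\<^bsub>R\<^esub>"
  "x \<oplus>\<^bsub>ring_lmod R\<^esub> y = x \<oplus>\<^bsub>R\<^esub> y" "a \<odot>\<^bsub>ring_lmod R\<^esub> x = a \<otimes>\<^bsub>R\<^esub> x"
  by (simp_all add: ring_lmod_def)

lemma ring_lmod_lmod: "ring R \<Longrightarrow> lmod R (ring_lmod R)"
proof -
  assume "ring R"
  then interpret R: ring R .
  have "abelian_group (ring_lmod R)"
  proof (rule abelian_groupI)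
    fix v assume "v \<in> carrier (ring_lmod R)"
    thus "\<exists>w\<in>carrier (ring_lmod R). w \<oplus>\<^bsub>ring_lmod R\<^esub> v = \<zero>\<^bsub>ring_lmod R\<^esub>"
      by (intro bexI[of _ "\<ominus>\<^bsub>R\<^esub> v"]) (auto simp: R.l_neg)
  qed (auto simp: R.a_ac)
  thus ?thesis unfolding lmod_def
    by (auto simp: R.r_distr R.l_distr R.m_assoc \<open>ring R\<close>)
qed

definition unit_vec :: "'a ring \<Rightarrow> nat \<Rightarrow> nat \<Rightarrow> 'a" where
  "unit_vec R k = (\<lambda>i. if i = k then \<one>\<^bsub>R\<^esub> else \<zero>\<^bsub>R\<^esub>)"

definition lincomb :: "'a ring \<Rightarrow> ('a,'m) module \<Rightarrow> (nat \<Rightarrow> 'm) \<Rightarrow> nat \<Rightarrow> (nat \<Rightarrow> 'a) \<Rightarrow> 'm" where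
  "lincomb R X xs n v = lsum X (\<lambda>i. v i \<odot>\<^bsub>X\<^esub> xs i) n"

lemma unit_vec_carrier: "ring R \<Longrightarrow> k < n \<Longrightarrow> unit_vec R k \<in> carrier (freemod R n)"
  by (auto simp: unit_vec_def freemod_simps ring.ring_simprules)

lemma lincomb_lhom:
  assumes X: "lmod R X" and xs: "\<And>i. i < n \<Longrightarrow> xs i \<in> carrier X"
  shows "lincomb R X xs n \<in> lhom R (freemod R n) X"
proof -
  interpret lmodule R X by (rule lmodule.intro) fact
  show ?thesis
  proof (rule lhomI)
    fix v assume "v \<in> carrier (freemod R n)"
    thus "lincomb R X xs n v \<in> carrier X"
      unfolding lincomb_def using xs by (intro M.lsum_closed) (auto simp: freemod_simps)
  next
    fix v w assume vw: "v \<in> carrier (freemod R n)" "w \<in> carrier (freemod R n)"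
    have "lincomb R X xs n (v \<oplus>\<^bsub>freemod R n\<^esub> w)
        = lsum X (\<lambda>i. v i \<odot>\<^bsub>X\<^esub> xs i \<oplus>\<^bsub>X\<^esub> w i \<odot>\<^bsub>X\<^esub> xs i) n"
      unfolding lincomb_def using vw xs by (intro M.lsum_cong) (auto simp: freemod_simps add_smult)
    also have "\<dots> = lincomb R X xs n v \<oplus>\<^bsub>X\<^esub> lincomb R X xs n w"
      unfolding lincomb_def using vw xs by (intro M.lsum_add) (auto simp: freemod_simps)
    finally show "lincomb R X xs n (v \<oplus>\<^bsub>freemod R n\<^esub> w) = lincomb R X xs n v \<oplus>\<^bsub>X\<^esub> lincomb R X xs n w" .
  next
    fix a v assume av: "a \<in> carrier R" "v \<in> carrier (freemod R n)"
    have "lincomb R X xs n (a \<odot>\<^bsub>freemod R n\<^esub> v) = lsum X (\<lambda>i. a \<odot>\<^bsub>X\<^esub> (v i \<odot>\<^bsub>X\<^esub> xs i)) n"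
      unfolding lincomb_def using av xs by (intro M.lsum_cong) (auto simp: freemod_simps mult_smult)
    also have "\<dots> = a \<odot>\<^bsub>X\<^esub> lincomb R X xs n v"
      unfolding lincomb_def using av xs by (intro lsum_smult[symmetric]) (auto simp: freemod_simps)
    finally show "lincomb R X xs n (a \<odot>\<^bsub>freemod R n\<^esub> v) = a \<odot>\<^bsub>X\<^esub> lincomb R X xs n v" .
  qed
qed

lemma lincomb_unit_vec:
  assumes X: "lmod R X" and xs: "\<And>i. i < n \<Longrightarrow> xs i \<in> carrier X" and k: "k < n"
  shows "lincomb R X xs n (unit_vec R k) = xs k"
proof -
  interpret lmodule R X by (rule lmodule.intro) fact
  show ?thesis unfolding lincomb_def
    by (subst M.lsum_single[OF k]) (use xs k in \<open>auto simp: unit_vec_def\<close>)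
qed

lemma freemod_lspan_unit_vecs:
  assumes R: "ring R"
  shows "carrier (freemod R n) = lspan R (freemod R n) (unit_vec R ` {..<n})"
proof
  interpret R: ring R by fact
  let ?F = "freemod R n" and ?S = "lspan R (freemod R n) (unit_vec R ` {..<n})"
  show "?S \<subseteq> carrier ?F" by (rule lspan_subset_carrier)
  show "carrier ?F \<subseteq> ?S"
  proof
    fix v assume v: "v \<in> carrier ?F"
    have coord: "lsum ?F f k j = lsum R (\<lambda>i. f i j) k" for f k j
      by (induction k) (auto simp: freemod_simps)
    have "v = lsum ?F (\<lambda>i. v i \<odot>\<^bsub>?F\<^esub> unit_vec R i) n"
    proof
      fix j
      show "v j = lsum ?F (\<lambda>i. v i \<odot>\<^bsub>?F\<^esub> unit_vec R i) n j"
      proof (cases "j < n")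
        case True
        have "lsum R (\<lambda>i. v i \<otimes>\<^bsub>R\<^esub> unit_vec R i j) n = v j \<otimes>\<^bsub>R\<^esub> unit_vec R j j"
          using True v by (intro R.lsum_single) (auto simp: unit_vec_def freemod_simps)
        thus ?thesis using v by (simp add: coord unit_vec_def freemod_simps)
      next
        case False
        have "lsum R (\<lambda>i. v i \<otimes>\<^bsub>R\<^esub> unit_vec R i j) n = \<zero>\<^bsub>R\<^esub>"
          using False v by (intro R.lsum_zero) (auto simp: unit_vec_def freemod_simps)
        thus ?thesis using v False by (simp add: coord freemod_simps)
      qed
    qed
    moreover have "lsum ?F (\<lambda>i. v i \<odot>\<^bsub>?F\<^esub> unit_vec R i) n \<in> ?S"
    proof (rule lsum_in_lsubmod[OF lspan_lsubmod[OF freemod_lmod[OF R]]])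
      fix i assume "i < n"
      hence "unit_vec R i \<in> ?S" using lspan_superset[of "unit_vec R ` {..<n}" ?F R] unit_vec_carrier[OF R]
        by blast
      thus "v i \<odot>\<^bsub>?F\<^esub> unit_vec R i \<in> ?S"
        using v lsubmod_smult[OF lspan_lsubmod[OF freemod_lmod[OF R]]] by (auto simp: freemod_simps)
    qed
    ultimately show "v \<in> ?S" by simp
  qed
qed

lemma freemod_lhom_eq:
  assumes R: "ring R" and X: "lmod R X" and f: "f \<in> lhom R (freemod R n) X" and g: "g \<in> lhom R (freemod R n) X"
    and eq: "\<And>k. k < n \<Longrightarrow> f (unit_vec R k) = g (unit_vec R k)" and v: "v \<in> carrier (freemod R n)"
  shows "f v = g v"
  by (rule lhom_eq_on_lspan[OF freemod_lmod[OF R] X f g _ _ v[unfolded freemod_lspan_unit_vecs[OF R]]])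
    (use eq unit_vec_carrier[OF R] in auto)

lemma freemod_lift:
  assumes R: "ring R" and E: "lmod R E" and N: "lmod R N" and p: "p \<in> lhom R E N"
    and f: "f \<in> lhom R (freemod R n) N" and fp: "f ` carrier (freemod R n) \<subseteq> p ` carrier E"
  obtains g where "g \<in> lhom R (freemod R n) E" "\<forall>v \<in> carrier (freemod R n). p (g v) = f v"
proof -
  define es where "es j = inv_into (carrier E) p (f (unit_vec R j))" for j
  have es: "es j \<in> carrier E" "p (es j) = f (unit_vec R j)" if "j < n" for j
    using fp unit_vec_carrier[OF R that] unfolding es_def by (auto simp: inv_into_into f_inv_into_f)
  have g: "lincomb R E es n \<in> lhom R (freemod R n) E" by (rule lincomb_lhom[OF E es(1)])
  have "\<forall>v \<in> carrier (freemod R n). p (lincomb R E es n v) = f v"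
    using freemod_lhom_eq[OF R N lhom_comp[OF g p] f] lincomb_unit_vec[OF E es(1)] es by simp
  with g show ?thesis by (rule that)
qed

section \<open>Finitely presented modules\<close>

lemma lfpE:
  assumes "lfp R N"
  obtains n q G where "q \<in> lhom R (freemod R n) N" "q ` carrier (freemod R n) = carrier N"
    "finite G" "G \<subseteq> carrier (freemod R n)"
    "{v \<in> carrier (freemod R n). q v = \<zero>\<^bsub>N\<^esub>} = lspan R (freemod R n) G"
proof -
  have R: "ring R" using assms lmod_ring by (auto simp: lfp_def)
  from assms obtain n q where q: "q \<in> lhom R (freemod R n) N" "q ` carrier (freemod R n) = carrier N"
    "lfingen R (freemod R n) {v \<in> carrier (freemod R n). q v = \<zero>\<^bsub>N\<^esub>}" by (auto simp: lfp_def)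
  with that show ?thesis unfolding lfingen_iff_lspan[OF freemod_lmod[OF R]] by blast
qed

lemma lfpI:
  assumes N: "lmod R N" and q: "q \<in> lhom R (freemod R n) N" "q ` carrier (freemod R n) = carrier N"
    and G: "finite G" "G \<subseteq> carrier (freemod R n)"
    "{v \<in> carrier (freemod R n). q v = \<zero>\<^bsub>N\<^esub>} = lspan R (freemod R n) G"
  shows "lfp R N"
proof -
  have "lfingen R (freemod R n) {v \<in> carrier (freemod R n). q v = \<zero>\<^bsub>N\<^esub>}"
    using G lfingen_lspan[OF freemod_lmod[OF lmod_ring[OF N]] G(1,2)] by simp
  thus ?thesis unfolding lfp_def using N q by blast
qed

lemma freemod_lfp:
  assumes R: "ring R"
  shows "lfp R (freemod R n)"
proof (rule lfpI[OF freemod_lmod[OF R] lhom_id])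
  interpret F: lmodule R "freemod R n" by (rule lmodule.intro) (rule freemod_lmod[OF R])
  show "{v \<in> carrier (freemod R n). v = \<zero>\<^bsub>freemod R n\<^esub>} = lspan R (freemod R n) {}"
    using lspan_empty[OF freemod_lmod[OF R]] by auto
qed auto

lemma lfp_lfingen_carrier:
  assumes N: "lfp R N"
  shows "lfingen R N (carrier N)"
proof -
  have Nl: "lmod R N" and R: "ring R" using N lmod_ring by (auto simp: lfp_def)
  obtain n q where q: "q \<in> lhom R (freemod R n) N" "q ` carrier (freemod R n) = carrier N"
    by (rule lfpE[OF N])
  have F: "lfingen R (freemod R n) (carrier (freemod R n))"
    by (subst freemod_lspan_unit_vecs[OF R], rule lfingen_lspan[OF freemod_lmod[OF R]])
      (use unit_vec_carrier[OF R] in auto)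
  show ?thesis using lfingen_image[OF freemod_lmod[OF R] Nl q(1) F] q(2) by simp
qed

lemma lfingen_lhom_image:
  assumes "lfp R N" "lmod R N'" "\<alpha> \<in> lhom R N N'"
  shows "lfingen R N' (\<alpha> ` carrier N)"
  using lfingen_image[OF _ assms(2,3) lfp_lfingen_carrier[OF assms(1)]] assms(1) by (simp add: lfp_def)

text \<open>The preimage is spanned by the kernel together with chosen preimages of generators of S.\<close>

lemma lfingen_preimage:
  assumes F: "lmod R F" and N: "lmod R N" and q: "q \<in> lhom R F N" "q ` carrier F = carrier N"
    and ker: "lfingen R F {v \<in> carrier F. q v = \<zero>\<^bsub>N\<^esub>}" and S: "lfingen R N S"
  shows "lfingen R F {v \<in> carrier F. q v \<in> S}"
proof -
  interpret F: lmodule R F by (rule lmodule.intro) fact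
  interpret N: lmodule R N by (rule lmodule.intro) fact
  obtain G where G: "finite G" "G \<subseteq> carrier F" "{v \<in> carrier F. q v = \<zero>\<^bsub>N\<^esub>} = lspan R F G"
    using ker unfolding lfingen_iff_lspan[OF F] by blast
  obtain Y where Y: "finite Y" "Y \<subseteq> carrier N" "S = lspan R N Y"
    using S unfolding lfingen_iff_lspan[OF N] by blast
  define Z where "Z = inv_into (carrier F) q ` Y"
  have Zc: "Z \<subseteq> carrier F" and qZ: "q ` Z = Y"
    using Y(2) q(2) unfolding Z_def by (auto simp: inv_into_into f_inv_into_f image_image subset_iff)
  let ?T = "{v \<in> carrier F. q v \<in> S}"
  have Ts: "lsubmod R F ?T" unfolding Y(3) by (rule lsubmod_preimage[OF F N q(1) lspan_lsubmod[OF N]])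
  have "?T = lspan R F (G \<union> Z)"
  proof
    have "G \<subseteq> ?T"
    proof
      fix g assume "g \<in> G"
      hence "g \<in> carrier F" "q g = \<zero>\<^bsub>N\<^esub>" using G(2,3) lspan_superset[OF G(2), of R] by auto
      thus "g \<in> ?T" using lsubmod_zero[OF lspan_lsubmod[OF N]] Y(3) by simp
    qed
    moreover have "Z \<subseteq> ?T" using Zc qZ lspan_superset[OF Y(2)] unfolding Y(3) by blast
    ultimately show "lspan R F (G \<union> Z) \<subseteq> ?T" by (intro lspan_minimal[OF Ts]) auto
  next
    show "?T \<subseteq> lspan R F (G \<union> Z)"
    proof
      fix v assume "v \<in> ?T"
      hence v: "v \<in> carrier F" "q v \<in> q ` lspan R F Z"
        using lspan_image[OF F N q(1) Zc] qZ Y(3) by auto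
      then obtain w where w: "w \<in> lspan R F Z" "q w = q v" by auto
      have wc: "w \<in> carrier F" using w(1) lspan_subset_carrier[of R F Z] by blast
      have "q (v \<ominus>\<^bsub>F\<^esub> w) = \<zero>\<^bsub>N\<^esub>"
        using lhom_minus[OF F N q(1) v(1) wc] w lhom_closed[OF q(1)] v by (simp add: N.M.minus_zero_iff)
      hence "v \<ominus>\<^bsub>F\<^esub> w \<in> lspan R F (G \<union> Z)" using G(3) v(1) wc lspan_mono[of G "G \<union> Z"] by blast
      moreover have "w \<in> lspan R F (G \<union> Z)" using w(1) lspan_mono[of Z "G \<union> Z"] by blast
      ultimately have "(v \<ominus>\<^bsub>F\<^esub> w) \<oplus>\<^bsub>F\<^esub> w \<in> lspan R F (G \<union> Z)"
        by (rule lsubmod_add[OF lspan_lsubmod[OF F]])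
      thus "v \<in> lspan R F (G \<union> Z)" using v(1) wc by (simp add: F.M.minus_add_cancel)
    qed
  qed
  thus ?thesis using lfingen_lspan[OF F] G(1,2) Y(1) Zc unfolding Z_def by auto
qed

lemma quotmod_freemod_lfp:
  assumes R: "ring R" and T: "lfingen R (freemod R n) T"
  shows "lfp R (quotmod (freemod R n) T)"
proof -
  have F: "lmod R (freemod R n)" by (rule freemod_lmod[OF R])
  interpret Q: lquotient R "freemod R n" T
    using T F by unfold_locales (auto simp: lfingen_def lmod_def)
  have "{v \<in> carrier (freemod R n). lcoset (freemod R n) T v = \<zero>\<^bsub>quotmod (freemod R n) T\<^esub>} = T"
    using Q.lcoset_eq_zero_iff Q.S lsubmod_subset by blast
  thus ?thesis unfolding lfp_def
    by (intro conjI exI[of _ n] exI[of _ "lcoset (freemod R n) T"]) (use Q.quotmod_lmod Q.lcoset_lhom T in auto)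
qed

text \<open>The cokernel is built as a quotient of a free module, which is why it lives in fpmod.\<close>

lemma lfp_cokernel:
  assumes N: "lfp R N" and S: "lfingen R N S"
  obtains C :: "'a fpmod" and c where "lfp R C" "c \<in> lhom R N C" "c ` carrier N = carrier C"
    "{y \<in> carrier N. c y = \<zero>\<^bsub>C\<^esub>} = S"
proof -
  have Nl: "lmod R N" and R: "ring R" using N lmod_ring by (auto simp: lfp_def)
  obtain n q G where q: "q \<in> lhom R (freemod R n) N" "q ` carrier (freemod R n) = carrier N"
    and G: "finite G" "G \<subseteq> carrier (freemod R n)"
    "{v \<in> carrier (freemod R n). q v = \<zero>\<^bsub>N\<^esub>} = lspan R (freemod R n) G"
    by (rule lfpE[OF N])
  let ?F = "freemod R n"
  define T where "T = {v \<in> carrier ?F. q v \<in> S}"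
  have F: "lmod R ?F" by (rule freemod_lmod[OF R])
  have Tfg: "lfingen R ?F T" unfolding T_def
    by (rule lfingen_preimage[OF F Nl q]) (use G lfingen_lspan[OF F] S in auto)
  interpret Q: lquotient R ?F T
    using Tfg F by unfold_locales (auto simp: lfingen_def lmod_def)
  let ?C = "quotmod ?F T"
  have van: "lcoset ?F T x = \<zero>\<^bsub>?C\<^esub>" if "x \<in> carrier ?F" "q x = \<zero>\<^bsub>N\<^esub>" for x
    using that Q.lcoset_eq_zero_iff lsubmod_zero[of R N S] S unfolding T_def by (auto simp: lfingen_def)
  obtain c where c: "c \<in> lhom R N ?C" "\<And>x. x \<in> carrier ?F \<Longrightarrow> c (q x) = lcoset ?F T x"
    using lhom_factor_surj[OF F Nl Q.quotmod_lmod q Q.lcoset_lhom van] by blast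
  have "c ` carrier N = carrier ?C"
  proof
    show "c ` carrier N \<subseteq> carrier ?C" using lhom_closed[OF c(1)] by blast
    show "carrier ?C \<subseteq> c ` carrier N"
    proof
      fix A assume "A \<in> carrier ?C"
      then obtain x where x: "x \<in> carrier ?F" "A = lcoset ?F T x" by auto
      thus "A \<in> c ` carrier N" using c(2) lhom_closed[OF q(1)] by force
    qed
  qed
  moreover have "c y = \<zero>\<^bsub>?C\<^esub> \<longleftrightarrow> y \<in> S" if "y \<in> carrier N" for y
  proof -
    have "y \<in> q ` carrier ?F" using that q(2) by simp
    then obtain x where x: "x \<in> carrier ?F" "y = q x" by (rule imageE)
    thus ?thesis using c(2) Q.lcoset_eq_zero_iff unfolding T_def by simp
  qed
  moreover have "S \<subseteq> carrier N" using S by (simp add: lfingen_def lsubmod_def)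
  ultimately show ?thesis using that[OF quotmod_freemod_lfp[OF R Tfg] c(1)] by blast
qed

lemma lfp_iso_fpmod:
  assumes N: "lfp R N"
  obtains C :: "'a fpmod" and c where "lfp R C" "c \<in> lhom R N C" "bij_betw c (carrier N) (carrier C)"
proof -
  have Nl: "lmod R N" using N by (simp add: lfp_def)
  interpret N: lmodule R N by (rule lmodule.intro) fact
  obtain C :: "'a fpmod" and c where C: "lfp R C" "c \<in> lhom R N C" "c ` carrier N = carrier C"
    "{y \<in> carrier N. c y = \<zero>\<^bsub>C\<^esub>} = lspan R N {}"
    by (rule lfp_cokernel[OF N lfingen_lspan[OF Nl finite.emptyI empty_subsetI]])
  have Cl: "lmod R C" using C(1) by (simp add: lfp_def)
  interpret C: lmodule R C by (rule lmodule.intro) fact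
  have "inj_on c (carrier N)"
  proof (rule inj_onI)
    fix x y assume xy: "x \<in> carrier N" "y \<in> carrier N" "c x = c y"
    hence "c (x \<ominus>\<^bsub>N\<^esub> y) = \<zero>\<^bsub>C\<^esub>"
      using lhom_minus[OF Nl Cl C(2)] lhom_closed[OF C(2)] by (simp add: C.M.minus_zero_iff)
    hence "x \<ominus>\<^bsub>N\<^esub> y = \<zero>\<^bsub>N\<^esub>" using C(4) lspan_empty[OF Nl] xy by blast
    thus "x = y" using xy N.M.minus_zero_iff by simp
  qed
  thus ?thesis using that C by (auto simp: bij_betw_def)
qed

lemma ring_lmod_lfp:
  assumes lc: "left_coherent R"
  shows "lfp R (ring_lmod R)"
proof -
  have R: "ring R" using lc by (simp add: left_coherent_def)
  interpret R: ring R by fact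
  have "carrier R = lspan R (ring_lmod R) {\<one>\<^bsub>R\<^esub>}"
  proof
    show "carrier R \<subseteq> lspan R (ring_lmod R) {\<one>\<^bsub>R\<^esub>}"
    proof
      fix x assume x: "x \<in> carrier R"
      have "\<one>\<^bsub>R\<^esub> \<in> lspan R (ring_lmod R) {\<one>\<^bsub>R\<^esub>}" using lspan_superset[of "{\<one>\<^bsub>R\<^esub>}" "ring_lmod R" R] by simp
      hence "x \<odot>\<^bsub>ring_lmod R\<^esub> \<one>\<^bsub>R\<^esub> \<in> lspan R (ring_lmod R) {\<one>\<^bsub>R\<^esub>}"
        using lsubmod_smult[OF lspan_lsubmod[OF ring_lmod_lmod[OF R]] x] by blast
      thus "x \<in> lspan R (ring_lmod R) {\<one>\<^bsub>R\<^esub>}" using x by simp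
    qed
  qed (use lspan_subset_carrier[of R "ring_lmod R"] in simp)
  moreover have "lfingen R (ring_lmod R) (lspan R (ring_lmod R) {\<one>\<^bsub>R\<^esub>})"
    by (rule lfingen_lspan[OF ring_lmod_lmod[OF R]]) simp_all
  ultimately have "lfingen R (ring_lmod R) (carrier R)" by simp
  hence "lfp R ((ring_lmod R)\<lparr>carrier := carrier R\<rparr>)" using lc by (simp add: left_coherent_def)
  moreover have "(ring_lmod R)\<lparr>carrier := carrier R\<rparr> = ring_lmod R" by (simp add: ring_lmod_def)
  ultimately show ?thesis by simp
qed

section \<open>Short exact sequences and the pushout\<close>

definition short_exact :: "'a ring \<Rightarrow> ('a,'m) module \<Rightarrow> ('a,'e) module \<Rightarrow> ('a,'n) module
    \<Rightarrow> ('m \<Rightarrow> 'e) \<Rightarrow> ('e \<Rightarrow> 'n) \<Rightarrow> bool" where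
  "short_exact R M E N i p \<longleftrightarrow> lmod R M \<and> lmod R E \<and> lmod R N \<and> i \<in> lhom R M E \<and> p \<in> lhom R E N \<and>
     inj_on i (carrier M) \<and> p ` carrier E = carrier N \<and> i ` carrier M = {e \<in> carrier E. p e = \<zero>\<^bsub>N\<^esub>}"

definition split_mono :: "'a ring \<Rightarrow> ('a,'m) module \<Rightarrow> ('a,'e) module \<Rightarrow> ('m \<Rightarrow> 'e) \<Rightarrow> bool" where
  "split_mono R M E i \<longleftrightarrow> (\<exists>r \<in> lhom R E M. \<forall>x \<in> carrier M. r (i x) = x)"

lemma short_exact_transport:
  assumes ex: "short_exact R M E N i p" and j: "inj_on j (carrier E)"
  shows "short_exact R M (transport_lmod E j) N (\<lambda>x. j (i x)) (\<lambda>e. p (inv_into (carrier E) j e))"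
proof -
  let ?T = "transport_lmod E j" and ?k = "inv_into (carrier E) j"
  have E: "lmod R E" and i: "i \<in> lhom R M E" and p: "p \<in> lhom R E N"
    using ex by (auto simp: short_exact_def)
  have kj: "?k (j e) = e" if "e \<in> carrier E" for e using j that by simp
  have "inj_on (\<lambda>x. j (i x)) (carrier M)"
    using ex j lhom_closed[OF i] by (auto simp: short_exact_def inj_on_def)
  moreover have "(\<lambda>e. p (?k e)) ` carrier ?T = carrier N"
  proof -
    have "(\<lambda>e. p (?k e)) ` carrier ?T = p ` (?k ` j ` carrier E)"
      by (simp add: transport_lmod_simps image_image)
    also have "?k ` j ` carrier E = carrier E" using kj by (force simp: image_image)
    finally show ?thesis using ex by (simp add: short_exact_def)
  qed
  moreover have "(\<lambda>x. j (i x)) ` carrier M = {e \<in> carrier ?T. p (?k e) = \<zero>\<^bsub>N\<^esub>}"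
  proof -
    have "(\<lambda>x. j (i x)) ` carrier M = j ` {e \<in> carrier E. p e = \<zero>\<^bsub>N\<^esub>}"
      using ex unfolding short_exact_def by (metis image_image)
    also have "\<dots> = {e \<in> carrier ?T. p (?k e) = \<zero>\<^bsub>N\<^esub>}"
      using kj by (auto simp: transport_lmod_simps)
    finally show ?thesis .
  qed
  ultimately show ?thesis
    using ex transport_lmod_lmod[OF E j] lhom_comp[OF i transport_lmod_lhom[OF E j]]
      lhom_comp[OF transport_lmod_inv_lhom[OF E j] p]
    unfolding short_exact_def by blast
qed

text \<open>Every extension of N by M embeds into M \<times> N via e \<mapsto> (i' (e - s (p e)), p e), where i' inverts i
  and s is a set-theoretic section of p; so splitting can be tested on extensions with that carrier type.\<close>

lemma short_exact_embedding:
  assumes ex: "short_exact R M E N i p"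
  shows "inj_on (\<lambda>e. (inv_into (carrier M) i (e \<ominus>\<^bsub>E\<^esub> inv_into (carrier E) p (p e)), p e)) (carrier E)"
proof (rule inj_onI)
  have E: "lmod R E" and N: "lmod R N" and p: "p \<in> lhom R E N"
    using ex by (auto simp: short_exact_def)
  interpret E: lmodule R E by (rule lmodule.intro) fact
  interpret N: lmodule R N by (rule lmodule.intro) fact
  let ?s = "\<lambda>e. inv_into (carrier E) p (p e)"
  have s: "?s e \<in> carrier E" "p (?s e) = p e" if "e \<in> carrier E" for e
    using that by (auto simp: inv_into_into f_inv_into_f)
  have d: "e \<ominus>\<^bsub>E\<^esub> ?s e \<in> i ` carrier M" if "e \<in> carrier E" for e
  proof -
    have "p (e \<ominus>\<^bsub>E\<^esub> ?s e) = \<zero>\<^bsub>N\<^esub>"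
      using lhom_minus[OF E N p that s(1)[OF that]] s(2)[OF that] lhom_closed[OF p that]
      by (simp add: N.M.minus_zero_iff)
    thus ?thesis using ex that s(1)[OF that] unfolding short_exact_def by simp
  qed
  fix e e' assume ee: "e \<in> carrier E" "e' \<in> carrier E"
    and "(inv_into (carrier M) i (e \<ominus>\<^bsub>E\<^esub> ?s e), p e) = (inv_into (carrier M) i (e' \<ominus>\<^bsub>E\<^esub> ?s e'), p e')"
  hence "e \<ominus>\<^bsub>E\<^esub> ?s e = e' \<ominus>\<^bsub>E\<^esub> ?s e'" "?s e = ?s e'"
    using d[OF ee(1)] d[OF ee(2)] by (metis f_inv_into_f prod.inject)+
  thus "e = e'" using ee s by (metis E.M.minus_add_cancel)
qed

lemma ext1_zero_split:
  fixes M :: "('a,'m) module" and N :: "('a,'n) module" and E :: "('a,'e) module"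
  assumes ext: "ext1_zero R N M" and ex: "short_exact R M E N i p"
  shows "split_mono R M E i"
proof -
  define j where "j e = (inv_into (carrier M) i (e \<ominus>\<^bsub>E\<^esub> inv_into (carrier E) p (p e)), p e)" for e
  have E: "lmod R E" using ex by (simp add: short_exact_def)
  have j: "inj_on j (carrier E)" unfolding j_def by (rule short_exact_embedding[OF ex])
  have "short_exact R M (transport_lmod E j) N (\<lambda>x. j (i x)) (\<lambda>e. p (inv_into (carrier E) j e))"
    by (rule short_exact_transport[OF ex j])
  then obtain r where r: "r \<in> lhom R (transport_lmod E j) M" "\<forall>x\<in>carrier M. r (j (i x)) = x"
    using ext[unfolded ext1_zero_def, rule_format, of "transport_lmod E j" "\<lambda>x. j (i x)"
        "\<lambda>e. p (inv_into (carrier E) j e)"]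
    unfolding short_exact_def by auto
  show ?thesis unfolding split_mono_def
    using lhom_comp[OF transport_lmod_lhom[OF E j] r(1)] r(2) by (intro bexI[of _ "\<lambda>x. r (j x)"]) simp_all
qed

text \<open>The pushout of h : N \<rightarrow> M along \<alpha> : N \<rightarrow> N', realised as the quotient of M \<oplus> N'
  by the image of x \<mapsto> (h x, -\<alpha> x).\<close>

locale pushout =
  fixes R :: "'a ring" and M :: "('a,'m) module" and N :: "('a,'n) module" and N' :: "('a,'k) module"
    and h :: "'n \<Rightarrow> 'm" and \<alpha> :: "'n \<Rightarrow> 'k"
  assumes M: "lmod R M" and N: "lmod R N" and N': "lmod R N'"
    and h: "h \<in> lhom R N M" and \<alpha>: "\<alpha> \<in> lhom R N N'"
begin

abbreviation "P \<equiv> dirsum M N'"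

definition rel :: "('m \<times> 'k) set" where
  "rel = (\<lambda>x. (h x, \<ominus>\<^bsub>N'\<^esub> \<alpha> x)) ` carrier N"

abbreviation "E \<equiv> quotmod P rel"

definition inl :: "'m \<Rightarrow> ('m \<times> 'k) set" where
  "inl m = lcoset P rel (m, \<zero>\<^bsub>N'\<^esub>)"

definition inr :: "'k \<Rightarrow> ('m \<times> 'k) set" where
  "inr y = lcoset P rel (\<zero>\<^bsub>M\<^esub>, y)"

sublocale M: lmodule R M by (rule lmodule.intro) (rule M)
sublocale N: lmodule R N by (rule lmodule.intro) (rule N)
sublocale N': lmodule R N' by (rule lmodule.intro) (rule N')

lemma P_lmod: "lmod R P"
  by (rule dirsum_lmod[OF M N'])

lemma rel_lsubmod: "lsubmod R P rel"
proof -
  have "(\<lambda>x. (h x, \<ominus>\<^bsub>N'\<^esub> \<alpha> x)) \<in> lhom R N P"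
    using lhom_closed[OF h] lhom_closed[OF lhom_neg_map[OF N' \<alpha>]] lhom_add[OF h]
      lhom_add[OF lhom_neg_map[OF N' \<alpha>]] lhom_smult[OF h] lhom_smult[OF lhom_neg_map[OF N' \<alpha>]]
    by (intro lhomI) auto
  thus ?thesis unfolding rel_def by (rule lsubmod_image[OF N P_lmod _ lsubmod_carrier[OF N]])
qed

sublocale Q: lquotient R P rel
  by (rule lquotient.intro[OF lmodule.intro[OF P_lmod]]) (rule lquotient_axioms.intro[OF rel_lsubmod])

lemma E_lmod: "lmod R E"
  by (rule Q.quotmod_lmod)

lemma inl_lhom: "inl \<in> lhom R M E"
  unfolding inl_def by (rule lhom_comp[OF _ Q.lcoset_lhom]) (rule lhomI, auto)

lemma inr_lhom: "inr \<in> lhom R N' E"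
  unfolding inr_def by (rule lhom_comp[OF _ Q.lcoset_lhom]) (rule lhomI, auto)

lemma neg_rel: "x \<in> carrier N \<Longrightarrow> (\<ominus>\<^bsub>M\<^esub> h x, \<alpha> x) \<in> rel"
  using lhom_neg[OF N M h] lhom_neg[OF N N' \<alpha>] lhom_closed[OF \<alpha>] unfolding rel_def
  by (intro image_eqI[of _ _ "\<ominus>\<^bsub>N\<^esub> x"]) auto

lemma inr_comp_\<alpha>: "x \<in> carrier N \<Longrightarrow> inr (\<alpha> x) = inl (h x)"
  using Q.lcoset_eq neg_rel dirsum_minus[OF M N'] lhom_closed[OF h] lhom_closed[OF \<alpha>]
  unfolding inl_def inr_def by (simp add: M.M.minus_eq)

text \<open>inl is injective exactly because \<alpha> is: (m, 0) \<in> rel forces m = h x with \<alpha> x = 0.\<close>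

lemma inj_on_inl:
  assumes dz: "defect_zero N N' \<alpha>"
  shows "inj_on inl (carrier M)"
proof (rule inj_onI)
  fix m m' assume mm: "m \<in> carrier M" "m' \<in> carrier M" "inl m = inl m'"
  hence "(m \<ominus>\<^bsub>M\<^esub> m', \<zero>\<^bsub>N'\<^esub>) \<in> rel"
    using Q.lcoset_eq dirsum_minus[OF M N'] unfolding inl_def by simp
  then obtain x where x: "x \<in> carrier N" "m \<ominus>\<^bsub>M\<^esub> m' = h x" "\<ominus>\<^bsub>N'\<^esub> \<alpha> x = \<zero>\<^bsub>N'\<^esub>"
    unfolding rel_def by auto
  hence "\<alpha> x = \<zero>\<^bsub>N'\<^esub>" using lhom_closed[OF \<alpha> x(1)] N'.M.minus_minus by (metis N'.M.neg_zero)
  hence "x = \<zero>\<^bsub>N\<^esub>" using dz x(1) by (simp add: defect_zero_def)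
  hence "m \<ominus>\<^bsub>M\<^esub> m' = \<zero>\<^bsub>M\<^esub>" using x(2) lhom_zero[OF N M h] by simp
  thus "m = m'" using mm M.M.minus_zero_iff by blast
qed

lemma cokernel_factor:
  fixes C :: "('a,'c) module" and c :: "'k \<Rightarrow> 'c"
  assumes C: "lmod R C" and c: "c \<in> lhom R N' C" and ker: "\<alpha> ` carrier N \<subseteq> {y \<in> carrier N'. c y = \<zero>\<^bsub>C\<^esub>}"
  obtains p where "p \<in> lhom R E C" "\<forall>z \<in> carrier P. p (lcoset P rel z) = c (snd z)"
proof -
  interpret C: lmodule R C by (rule lmodule.intro) (rule C)
  have g: "(\<lambda>z. c (snd z)) \<in> lhom R P C" by (rule lhom_comp[OF dirsum_snd_lhom c])
  have van: "c (snd z) = \<zero>\<^bsub>C\<^esub>" if "z \<in> carrier P" "lcoset P rel z = \<zero>\<^bsub>E\<^esub>" for z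
  proof -
    have "z \<in> rel" using Q.lcoset_eq_zero_iff[OF that(1)] that(2) by simp
    then obtain x where x: "x \<in> carrier N" "z = (h x, \<ominus>\<^bsub>N'\<^esub> \<alpha> x)" unfolding rel_def by blast
    have "c (snd z) = \<ominus>\<^bsub>C\<^esub> c (\<alpha> x)" using lhom_neg[OF N' C c] lhom_closed[OF \<alpha>] x by simp
    moreover have "c (\<alpha> x) = \<zero>\<^bsub>C\<^esub>" using ker x(1) by blast
    ultimately show ?thesis by simp
  qed
  show ?thesis using lhom_factor_surj[OF P_lmod E_lmod C Q.lcoset_lhom _ g van] that by auto
qed

lemma cokernel_short_exact:
  fixes C :: "('a,'c) module" and c :: "'k \<Rightarrow> 'c"
  assumes dz: "defect_zero N N' \<alpha>"
    and C: "lmod R C" and c: "c \<in> lhom R N' C" "c ` carrier N' = carrier C"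
    and ker: "{y \<in> carrier N'. c y = \<zero>\<^bsub>C\<^esub>} = \<alpha> ` carrier N"
  obtains p where "short_exact R M E C inl p" "\<And>y. y \<in> carrier N' \<Longrightarrow> p (inr y) = c y"
proof -
  obtain p where p: "p \<in> lhom R E C" "\<forall>z \<in> carrier P. p (lcoset P rel z) = c (snd z)"
    using cokernel_factor[OF C c(1)] ker by blast
  have "p ` carrier E = carrier C"
  proof
    show "p ` carrier E \<subseteq> carrier C" using lhom_closed[OF p(1)] by blast
    show "carrier C \<subseteq> p ` carrier E"
    proof
      fix w assume "w \<in> carrier C"
      hence "w \<in> c ` carrier N'" using c(2) by simp
      then obtain y where y: "y \<in> carrier N'" "w = c y" by (rule imageE)
      hence "p (inr y) = w" using p(2) by (simp add: inr_def)
      thus "w \<in> p ` carrier E" using lhom_closed[OF inr_lhom y(1)] by blast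
    qed
  qed
  moreover have "inl ` carrier M = {e \<in> carrier E. p e = \<zero>\<^bsub>C\<^esub>}"
  proof
    show "inl ` carrier M \<subseteq> {e \<in> carrier E. p e = \<zero>\<^bsub>C\<^esub>}"
      using p(2) lhom_zero[OF N' C c(1)] lhom_closed[OF inl_lhom] unfolding inl_def by auto
    show "{e \<in> carrier E. p e = \<zero>\<^bsub>C\<^esub>} \<subseteq> inl ` carrier M"
    proof
      fix e assume e: "e \<in> {e \<in> carrier E. p e = \<zero>\<^bsub>C\<^esub>}"
      then obtain m y where my: "m \<in> carrier M" "y \<in> carrier N'" "e = lcoset P rel (m, y)" by auto
      hence "c y = \<zero>\<^bsub>C\<^esub>" using e p(2) by simp
      then obtain x where x: "x \<in> carrier N" "y = \<alpha> x" using ker my(2) by blast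
      have "e = inl m \<oplus>\<^bsub>E\<^esub> inr (\<alpha> x)" using my x Q.quotmod_add unfolding inl_def inr_def by simp
      also have "\<dots> = inl (m \<oplus>\<^bsub>M\<^esub> h x)"
        using inr_comp_\<alpha>[OF x(1)] Q.quotmod_add lhom_closed[OF h x(1)] my(1) unfolding inl_def by simp
      finally show "e \<in> inl ` carrier M" using my(1) lhom_closed[OF h x(1)] by blast
    qed
  qed
  ultimately have "short_exact R M E C inl p"
    unfolding short_exact_def using M E_lmod C inl_lhom p(1) inj_on_inl[OF dz] by blast
  moreover have "p (inr y) = c y" if "y \<in> carrier N'" for y using p(2) that by (simp add: inr_def)
  ultimately show ?thesis by (rule that)
qed

end

section \<open>fp-injectivity implies ker(Defect) \<subseteq> ker(ev_M)\<close>

theorem fp_injective_kerDefect_sub_kerEv: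
  fixes M :: "('a,'m) module"
  assumes M: "lmod R M" and fpi: "fp_injective R M"
  shows "kerDefect_sub_kerEv R M"
  unfolding kerDefect_sub_kerEv_def ev_zero_def
proof (intro allI impI ballI)
  fix N N' :: "'a fpmod" and \<alpha> h
  assume "lfp R N \<and> lfp R N' \<and> \<alpha> \<in> lhom R N N' \<and> defect_zero N N' \<alpha>" and h: "h \<in> lhom R N M"
  hence fp: "lfp R N" "lfp R N'" and \<alpha>: "\<alpha> \<in> lhom R N N'" and dz: "defect_zero N N' \<alpha>" by auto
  interpret pushout R M N N' h \<alpha> using M fp h \<alpha> by unfold_locales (auto simp: lfp_def)
  obtain C :: "'a fpmod" and c where C: "lfp R C" "c \<in> lhom R N' C" "c ` carrier N' = carrier C"
    "{y \<in> carrier N'. c y = \<zero>\<^bsub>C\<^esub>} = \<alpha> ` carrier N"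
    by (rule lfp_cokernel[OF fp(2) lfingen_lhom_image[OF fp(1) N' \<alpha>]])
  have Cl: "lmod R C" using C(1) by (simp add: lfp_def)
  obtain p where ex: "short_exact R M E C inl p" by (rule cokernel_short_exact[OF dz Cl C(2-4)])
  have "ext1_zero R C M" using fpi C(1) by (simp add: fp_injective_def)
  hence "split_mono R M E inl" by (rule ext1_zero_split[OF _ ex])
  then obtain r where r: "r \<in> lhom R E M" "\<forall>x \<in> carrier M. r (inl x) = x"
    unfolding split_mono_def by blast
  have "\<forall>x \<in> carrier N. r (inr (\<alpha> x)) = h x"
    using r(2) inr_comp_\<alpha> lhom_closed[OF h] by simp
  thus "\<exists>\<beta>\<in>lhom R N' M. \<forall>x\<in>carrier N. \<beta> (\<alpha> x) = h x"
    using lhom_comp[OF inr_lhom r(1)] by (intro bexI[of _ "\<lambda>y. r (inr y)"]) simp_all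
qed

section \<open>ker(Defect) \<subseteq> ker(ev_M) implies fp-injectivity\<close>

text \<open>The hypothesis only speaks about modules in R-mod; via isomorphic copies it applies to all
  finitely presented modules.\<close>

lemma kerDefect_sub_kerEv_extend:
  fixes N :: "('a,'n) module" and N' :: "('a,'k) module" and M :: "('a,'m) module"
  assumes sub: "kerDefect_sub_kerEv R M"
    and N: "lfp R N" and N': "lfp R N'" and \<alpha>: "\<alpha> \<in> lhom R N N'" and dz: "defect_zero N N' \<alpha>"
    and h: "h \<in> lhom R N M"
  shows "\<exists>\<beta> \<in> lhom R N' M. \<forall>x\<in>carrier N. \<beta> (\<alpha> x) = h x"
proof -
  have Nl: "lmod R N" and N'l: "lmod R N'" using N N' by (auto simp: lfp_def)
  obtain C :: "'a fpmod" and t where C: "lfp R C" "t \<in> lhom R N C" "bij_betw t (carrier N) (carrier C)"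
    by (rule lfp_iso_fpmod[OF N])
  obtain C' :: "'a fpmod" and t' where C': "lfp R C'" "t' \<in> lhom R N' C'" "bij_betw t' (carrier N') (carrier C')"
    by (rule lfp_iso_fpmod[OF N'])
  have Cl: "lmod R C" and C'l: "lmod R C'" using C(1) C'(1) by (auto simp: lfp_def)
  interpret N': lmodule R N' by (rule lmodule.intro) fact
  define s where "s = inv_into (carrier N) t"
  have s: "s \<in> lhom R C N" unfolding s_def by (rule lhom_inv_into[OF C(2) C(3) Nl])
  have st: "s (t x) = x" if "x \<in> carrier N" for x using C(3) that unfolding s_def bij_betw_def by simp
  have ts: "t (s y) = y" if "y \<in> carrier C" for y
    using C(3) that unfolding s_def bij_betw_def by (simp add: f_inv_into_f)
  define \<alpha>' where "\<alpha>' y = t' (\<alpha> (s y))" for y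
  have \<alpha>': "\<alpha>' \<in> lhom R C C'" unfolding \<alpha>'_def by (rule lhom_comp[OF lhom_comp[OF s \<alpha>] C'(2)])
  have "defect_zero C C' \<alpha>'" unfolding defect_zero_def
  proof (intro ballI impI)
    fix y assume y: "y \<in> carrier C" and "\<alpha>' y = \<zero>\<^bsub>C'\<^esub>"
    hence "t' (\<alpha> (s y)) = t' \<zero>\<^bsub>N'\<^esub>" using lhom_zero[OF N'l C'l C'(2)] by (simp add: \<alpha>'_def)
    hence "\<alpha> (s y) = \<zero>\<^bsub>N'\<^esub>"
      using C'(3) lhom_closed[OF \<alpha> lhom_closed[OF s y]] N'.M.zero_closed
      unfolding bij_betw_def inj_on_def by blast
    hence "s y = \<zero>\<^bsub>N\<^esub>" using dz lhom_closed[OF s y] by (simp add: defect_zero_def)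
    thus "y = \<zero>\<^bsub>C\<^esub>" using ts[OF y] lhom_zero[OF Nl Cl C(2)] by simp
  qed
  hence "ev_zero R C C' \<alpha>' M" using sub C(1) C'(1) \<alpha>' by (simp add: kerDefect_sub_kerEv_def)
  then obtain \<beta> where \<beta>: "\<beta> \<in> lhom R C' M" "\<forall>y\<in>carrier C. \<beta> (\<alpha>' y) = h (s y)"
    using bspec[OF _ lhom_comp[OF s h]] unfolding ev_zero_def by blast
  have "\<forall>x\<in>carrier N. \<beta> (t' (\<alpha> x)) = h x"
  proof
    fix x assume x: "x \<in> carrier N"
    have "\<beta> (\<alpha>' (t x)) = h (s (t x))" using \<beta>(2) lhom_closed[OF C(2) x] by blast
    thus "\<beta> (t' (\<alpha> x)) = h x" using st[OF x] by (simp add: \<alpha>'_def)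
  qed
  thus ?thesis using lhom_comp[OF C'(2) \<beta>(1)] by (intro bexI[of _ "\<lambda>x. \<beta> (t' x)"]) simp_all
qed

lemma lspan_kernel_subset:
  assumes A: "lmod R A" and F: "lmod R F" and B: "lmod R B"
    and \<pi>: "\<pi> \<in> lhom R A B" and w: "w \<in> lhom R F A" and H: "lsubmod R A H"
    and H0: "\<And>g. g \<in> H \<Longrightarrow> \<pi> g = \<zero>\<^bsub>B\<^esub>"
    and X: "X \<subseteq> {g \<oplus>\<^bsub>A\<^esub> w u | g u. g \<in> H \<and> u \<in> carrier F}"
    and ker: "\<And>u. u \<in> carrier F \<Longrightarrow> \<pi> (w u) = \<zero>\<^bsub>B\<^esub> \<Longrightarrow> w u \<in> H"
  shows "{z \<in> lspan R A X. \<pi> z = \<zero>\<^bsub>B\<^esub>} \<subseteq> H"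
proof
  interpret B: lmodule R B by (rule lmodule.intro) fact
  fix z assume "z \<in> {z \<in> lspan R A X. \<pi> z = \<zero>\<^bsub>B\<^esub>}"
  hence z: "z \<in> lspan R A X" "\<pi> z = \<zero>\<^bsub>B\<^esub>" by auto
  have "z \<in> {g \<oplus>\<^bsub>A\<^esub> w u | g u. g \<in> H \<and> u \<in> carrier F}"
    using lspan_minimal[OF lsubmod_add_image[OF A F w H] X] z(1) by blast
  then obtain g u where gu: "g \<in> H" "u \<in> carrier F" "z = g \<oplus>\<^bsub>A\<^esub> w u" by blast
  have gc: "g \<in> carrier A" using gu(1) lsubmod_subset[OF H] by blast
  have "\<pi> (w u) = \<zero>\<^bsub>B\<^esub>"
    using z(2) lhom_add[OF \<pi> gc lhom_closed[OF w gu(2)]] H0[OF gu(1)] lhom_closed[OF \<pi> lhom_closed[OF w gu(2)]]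
    unfolding gu(3) by simp
  thus "z \<in> H" using lsubmod_add[OF H gu(1) ker[OF gu(2)]] gu(3) by simp
qed

lemma lspan_kernel_eq:
  assumes A: "lmod R A" and F: "lmod R F" and B: "lmod R B" and \<pi>: "\<pi> \<in> lhom R A B"
    and X: "X \<subseteq> carrier A" and w: "w \<in> lhom R F A" and wK: "\<And>v. v \<in> carrier F \<Longrightarrow> w v \<in> lspan R A X"
    and u: "\<And>x. x \<in> X \<Longrightarrow> u x \<in> carrier F \<and> \<pi> (w (u x)) = \<pi> x"
    and Lg: "Lg \<subseteq> carrier F" "{v \<in> carrier F. \<pi> (w v) = \<zero>\<^bsub>B\<^esub>} = lspan R F Lg"
  shows "{z \<in> lspan R A X. \<pi> z = \<zero>\<^bsub>B\<^esub>} = lspan R A ((\<lambda>x. x \<ominus>\<^bsub>A\<^esub> w (u x)) ` X \<union> w ` Lg)"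
    (is "?Kz = lspan R A ?G")
proof
  interpret A: lmodule R A by (rule lmodule.intro) fact
  interpret B: lmodule R B by (rule lmodule.intro) fact
  let ?K = "lspan R A X"
  have Ks: "lsubmod R A ?K" and Kc: "?K \<subseteq> carrier A" by (rule lspan_lsubmod[OF A], rule lspan_subset_carrier)
  have gens: "?G \<subseteq> ?Kz"
  proof -
    have "x \<ominus>\<^bsub>A\<^esub> w (u x) \<in> ?Kz" if x: "x \<in> X" for x
    proof -
      have xc: "x \<in> carrier A" using x X by blast
      have "\<pi> (x \<ominus>\<^bsub>A\<^esub> w (u x)) = \<pi> x \<ominus>\<^bsub>B\<^esub> \<pi> x"
        using lhom_minus[OF A B \<pi> xc lhom_closed[OF w]] u[OF x] by simp
      thus ?thesis using lsubmod_minus[OF A Ks _ wK] lspan_superset[OF X, of R] x u[OF x]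
          lhom_closed[OF \<pi> xc] by (simp add: B.M.minus_zero_iff subset_iff)
    qed
    moreover have "w l \<in> ?Kz" if "l \<in> Lg" for l
      using that Lg lspan_superset[OF Lg(1), of R] wK by blast
    ultimately show ?thesis by blast
  qed
  have "?Kz = ?K \<inter> {z \<in> carrier A. \<pi> z = \<zero>\<^bsub>B\<^esub>}" using Kc by blast
  hence "lsubmod R A ?Kz" using lsubmod_Int[OF Ks lsubmod_kernel[OF A B \<pi>]] by simp
  thus HKz: "lspan R A ?G \<subseteq> ?Kz" by (rule lspan_minimal[OF _ gens])
  show "?Kz \<subseteq> lspan R A ?G"
  proof (rule lspan_kernel_subset[OF A F B \<pi> w lspan_lsubmod[OF A]])
    show "\<pi> g = \<zero>\<^bsub>B\<^esub>" if "g \<in> lspan R A ?G" for g using that HKz by blast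
    show "X \<subseteq> {g \<oplus>\<^bsub>A\<^esub> w v | g v. g \<in> lspan R A ?G \<and> v \<in> carrier F}"
    proof
      fix x assume x: "x \<in> X"
      have "x = (x \<ominus>\<^bsub>A\<^esub> w (u x)) \<oplus>\<^bsub>A\<^esub> w (u x)"
        using x X lhom_closed[OF w] u by (auto simp: A.M.minus_add_cancel)
      moreover have "x \<ominus>\<^bsub>A\<^esub> w (u x) \<in> lspan R A ?G" using x gens Kc
        by (intro subsetD[OF lspan_superset]) auto
      ultimately show "x \<in> {g \<oplus>\<^bsub>A\<^esub> w v | g v. g \<in> lspan R A ?G \<and> v \<in> carrier F}" using u x by blast
    qed
    fix v assume "v \<in> carrier F" "\<pi> (w v) = \<zero>\<^bsub>B\<^esub>"
    hence "w v \<in> w ` lspan R F Lg" using Lg(2) by auto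
    also have "\<dots> = lspan R A (w ` Lg)" by (rule lspan_image[OF F A w Lg(1)])
    also have "\<dots> \<subseteq> lspan R A ?G" by (rule lspan_mono) blast
    finally show "w v \<in> lspan R A ?G" .
  qed
qed

text \<open>Present \<pi>(K) by q : R^k \<rightarrow> \<pi>(K), lift q to w : R^k \<rightarrow> K, and choose u x with q (u x) = \<pi> x.\<close>

lemma lfingen_lspan_kernel:
  fixes A :: "('a,'m) module" and B :: "('a,'b) module"
  assumes A: "lmod R A" and B: "lmod R B" and \<pi>: "\<pi> \<in> lhom R A B"
    and X: "finite X" "X \<subseteq> carrier A" and I: "lfp R (B\<lparr>carrier := \<pi> ` lspan R A X\<rparr>)"
  shows "lfingen R A {z \<in> lspan R A X. \<pi> z = \<zero>\<^bsub>B\<^esub>}"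
proof -
  let ?K = "lspan R A X"
  have R: "ring R" using A by (rule lmod_ring)
  have Ks: "lsubmod R A ?K" and Kc: "?K \<subseteq> carrier A" by (rule lspan_lsubmod[OF A], rule lspan_subset_carrier)
  obtain k q Lg where q: "q \<in> lhom R (freemod R k) (B\<lparr>carrier := \<pi> ` ?K\<rparr>)"
      "q ` carrier (freemod R k) = \<pi> ` ?K"
    and Lg: "finite Lg" "Lg \<subseteq> carrier (freemod R k)"
      "{v \<in> carrier (freemod R k). q v = \<zero>\<^bsub>B\<^esub>} = lspan R (freemod R k) Lg"
    by (rule lfpE[OF I]) auto
  let ?F = "freemod R k"
  have \<pi>K: "\<pi> \<in> lhom R (A\<lparr>carrier := ?K\<rparr>) (B\<lparr>carrier := \<pi> ` ?K\<rparr>)"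
    by (rule lhom_corestrict[OF lhom_restrict[OF \<pi> Kc]]) simp
  obtain w where w': "w \<in> lhom R ?F (A\<lparr>carrier := ?K\<rparr>)" and \<pi>w: "\<forall>v \<in> carrier ?F. \<pi> (w v) = q v"
    by (rule freemod_lift[OF R lsubmod_lmod[OF A Ks] _ \<pi>K q(1)]) (use I q(2) in \<open>auto simp: lfp_def\<close>)
  have w: "w \<in> lhom R ?F A" and wK: "\<And>v. v \<in> carrier ?F \<Longrightarrow> w v \<in> ?K"
    using lhom_from_corestrict[OF w' Kc] lhom_closed[OF w'] by auto
  define u where "u x = inv_into (carrier ?F) q (\<pi> x)" for x
  have u: "u x \<in> carrier ?F \<and> \<pi> (w (u x)) = \<pi> x" if "x \<in> X" for x
    using that q(2) lspan_superset[OF X(2), of R] \<pi>w unfolding u_def by (auto simp: inv_into_into f_inv_into_f)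
  have "{v \<in> carrier ?F. \<pi> (w v) = \<zero>\<^bsub>B\<^esub>} = {v \<in> carrier ?F. q v = \<zero>\<^bsub>B\<^esub>}" using \<pi>w by auto
  hence kerw: "{v \<in> carrier ?F. \<pi> (w v) = \<zero>\<^bsub>B\<^esub>} = lspan R ?F Lg" using Lg(3) by simp
  have "{z \<in> ?K. \<pi> z = \<zero>\<^bsub>B\<^esub>} = lspan R A ((\<lambda>x. x \<ominus>\<^bsub>A\<^esub> w (u x)) ` X \<union> w ` Lg)"
    by (rule lspan_kernel_eq[OF A freemod_lmod[OF R] B \<pi> X(2) w wK u Lg(2) kerw])
  moreover have "(\<lambda>x. x \<ominus>\<^bsub>A\<^esub> w (u x)) ` X \<union> w ` Lg \<subseteq> carrier A"
    using X(2) lhom_closed[OF w] u Lg(2) A by (auto simp: lmod_def abelian_group.minus_closed)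
  ultimately show ?thesis using lfingen_lspan[OF A] X(1) Lg(1) by simp
qed

lemma lfingen_restrict_carrier:
  assumes "lfingen R M S" "S \<subseteq> C" "C \<subseteq> carrier M"
  shows "lfingen R (M\<lparr>carrier := C\<rparr>) S"
proof -
  from assms(1) obtain X where X: "finite X" "X \<subseteq> S" "\<forall>T. lsubmod R M T \<and> X \<subseteq> T \<longrightarrow> S \<subseteq> T"
    and s: "lsubmod R M S" by (auto simp: lfingen_def)
  have "lsubmod R (M\<lparr>carrier := C\<rparr>) S" using s assms(2) by (auto simp: lsubmod_def)
  moreover have "lsubmod R M T" if "lsubmod R (M\<lparr>carrier := C\<rparr>) T" for T
    using that assms(3) unfolding lsubmod_def by auto
  hence "\<forall>T. lsubmod R (M\<lparr>carrier := C\<rparr>) T \<and> X \<subseteq> T \<longrightarrow> S \<subseteq> T" using X(3) by blast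
  ultimately show ?thesis unfolding lfingen_def using X(1,2) by blast
qed

lemma freemod_Suc_restrict: "freemod R n = (freemod R (Suc n))\<lparr>carrier := carrier (freemod R n)\<rparr>"
  by (simp add: freemod_def)

lemma lfingen_last_coord_kernel:
  assumes lc: "left_coherent R" and K: "lfingen R (freemod R (Suc n)) K"
  shows "lfingen R (freemod R n) {z \<in> K. z n = \<zero>\<^bsub>R\<^esub>}"
proof -
  have R: "ring R" using lc by (simp add: left_coherent_def)
  let ?F' = "freemod R (Suc n)" and ?RL = "ring_lmod R" and ?Kz = "{z \<in> K. z n = \<zero>\<^bsub>R\<^esub>}"
  have F': "lmod R ?F'" and RL: "lmod R ?RL" using freemod_lmod[OF R] ring_lmod_lmod[OF R] by auto
  obtain X where X: "finite X" "X \<subseteq> carrier ?F'" "K = lspan R ?F' X"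
    using K unfolding lfingen_iff_lspan[OF F'] by blast
  have \<pi>: "(\<lambda>v. v n) \<in> lhom R ?F' ?RL" by (rule lhomI) (auto simp: freemod_simps)
  have "lfingen R ?RL ((\<lambda>v. v n) ` K)" by (rule lfingen_image[OF F' RL \<pi> K])
  hence "lfp R (?RL\<lparr>carrier := (\<lambda>v. v n) ` lspan R ?F' X\<rparr>)" using lc X(3) by (simp add: left_coherent_def)
  hence "lfingen R ?F' ?Kz" using lfingen_lspan_kernel[OF F' RL \<pi> X(1,2)] X(3) by simp
  moreover have "?Kz \<subseteq> carrier (freemod R n)"
  proof
    fix x assume "x \<in> ?Kz"
    hence x: "x \<in> carrier ?F'" "x n = \<zero>\<^bsub>R\<^esub>" using K lsubmod_subset by (auto simp: lfingen_def)
    have "x i = \<zero>\<^bsub>R\<^esub>" if "n \<le> i" for i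
      using x that by (cases "i = n") (auto simp: freemod_simps)
    thus "x \<in> carrier (freemod R n)" using x(1) by (simp add: freemod_simps)
  qed
  moreover have "carrier (freemod R n) \<subseteq> carrier ?F'" by (auto simp: freemod_simps)
  ultimately have "lfingen R (?F'\<lparr>carrier := carrier (freemod R n)\<rparr>) ?Kz"
    by (rule lfingen_restrict_carrier)
  thus ?thesis by (subst freemod_Suc_restrict)
qed

text \<open>Extending \<phi> from K \<subseteq> R^(n+1) once it is extended on K \<inter> R^n: the difference of \<phi> and the
  partial extension factors through the last coordinate of K, a finitely presented left ideal I;
  by hypothesis the resulting map I \<rightarrow> M extends along I \<subseteq> R.\<close>

lemma freemod_extension_step:
  fixes M :: "('a,'m) module"
  assumes lc: "left_coherent R" and M: "lmod R M" and sub: "kerDefect_sub_kerEv R M"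
    and K: "lfingen R (freemod R (Suc n)) K" and \<phi>: "\<phi> \<in> lhom R ((freemod R (Suc n))\<lparr>carrier := K\<rparr>) M"
    and \<beta>0: "\<beta>0 \<in> lhom R (freemod R n) M" "\<And>x. x \<in> K \<Longrightarrow> x n = \<zero>\<^bsub>R\<^esub> \<Longrightarrow> \<beta>0 x = \<phi> x"
  shows "\<exists>\<beta> \<in> lhom R (freemod R (Suc n)) M. \<forall>x\<in>K. \<beta> x = \<phi> x"
proof -
  have R: "ring R" using lc by (simp add: left_coherent_def)
  interpret M: lmodule R M by (rule lmodule.intro) fact
  let ?F' = "freemod R (Suc n)" and ?RL = "ring_lmod R"
  let ?Km = "?F'\<lparr>carrier := K\<rparr>" and ?Im = "?RL\<lparr>carrier := (\<lambda>v. v n) ` K\<rparr>"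
  have F': "lmod R ?F'" and RL: "lmod R ?RL" using freemod_lmod[OF R] ring_lmod_lmod[OF R] by auto
  have Ks: "lsubmod R ?F' K" using K by (simp add: lfingen_def)
  have Kc: "K \<subseteq> carrier ?F'" using lsubmod_subset[OF Ks] .
  have Km: "lmod R ?Km" by (rule lsubmod_lmod[OF F' Ks])
  have \<pi>: "(\<lambda>v. v n) \<in> lhom R ?F' ?RL" by (rule lhomI) (auto simp: freemod_simps)
  have Ifp: "lfp R ?Im" using lc lfingen_image[OF F' RL \<pi> K] by (simp add: left_coherent_def)
  define P where "P v = (\<lambda>i. if i < n then v i else \<zero>\<^bsub>R\<^esub>)" for v :: "nat \<Rightarrow> 'a"
  have P: "P \<in> lhom R ?F' (freemod R n)" unfolding P_def by (rule lhomI) (auto simp: freemod_simps)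
  have "(\<lambda>x. \<beta>0 (P x)) \<in> lhom R ?Km M" by (rule lhom_restrict[OF lhom_comp[OF P \<beta>0(1)] Kc])
  hence \<psi>: "(\<lambda>x. \<phi> x \<ominus>\<^bsub>M\<^esub> \<beta>0 (P x)) \<in> lhom R ?Km M" by (rule lhom_minus_map[OF M \<phi>])
  have P_id: "P x = x" if "x \<in> K" "x n = \<zero>\<^bsub>R\<^esub>" for x
  proof
    fix i show "P x i = x i"
      using that Kc by (cases "i < n"; cases "i = n") (auto simp: P_def freemod_simps)
  qed
  have van: "\<phi> x \<ominus>\<^bsub>M\<^esub> \<beta>0 (P x) = \<zero>\<^bsub>M\<^esub>" if "x \<in> carrier ?Km" "x n = \<zero>\<^bsub>?Im\<^esub>" for x
    using that P_id \<beta>0(2) lhom_closed[OF \<phi>] by (simp add: M.M.r_neg M.M.minus_eq)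
  have \<pi>K: "(\<lambda>v. v n) \<in> lhom R ?Km ?Im" by (rule lhom_corestrict[OF lhom_restrict[OF \<pi> Kc]]) simp
  have Im: "lmod R ?Im" using Ifp by (simp add: lfp_def)
  have "\<exists>\<chi> \<in> lhom R ?Im M. \<forall>x\<in>carrier ?Km. \<chi> (x n) = \<phi> x \<ominus>\<^bsub>M\<^esub> \<beta>0 (P x)"
    by (rule lhom_factor_surj[OF Km Im M \<pi>K _ \<psi> van]) simp
  then obtain \<chi> where \<chi>: "\<chi> \<in> lhom R ?Im M" "\<forall>x\<in>K. \<chi> (x n) = \<phi> x \<ominus>\<^bsub>M\<^esub> \<beta>0 (P x)"
    by auto
  have incl: "(\<lambda>x. x) \<in> lhom R ?Im ?RL"
    by (rule lhom_from_corestrict[OF lhom_id]) (use lhom_closed[OF \<pi>] Kc in auto)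
  have "\<exists>\<chi>' \<in> lhom R ?RL M. \<forall>x\<in>carrier ?Im. \<chi>' x = \<chi> x"
    by (rule kerDefect_sub_kerEv_extend[OF sub Ifp ring_lmod_lfp[OF lc] incl _ \<chi>(1)])
      (simp add: defect_zero_def)
  then obtain \<chi>' where \<chi>': "\<chi>' \<in> lhom R ?RL M" "\<forall>x\<in>carrier ?Im. \<chi>' x = \<chi> x" by blast
  have "(\<lambda>v. \<beta>0 (P v) \<oplus>\<^bsub>M\<^esub> \<chi>' (v n)) \<in> lhom R ?F' M"
    by (rule lhom_add_map[OF M lhom_comp[OF P \<beta>0(1)] lhom_comp[OF \<pi> \<chi>'(1)]])
  moreover have "\<forall>x\<in>K. \<beta>0 (P x) \<oplus>\<^bsub>M\<^esub> \<chi>' (x n) = \<phi> x"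
  proof
    fix x assume x: "x \<in> K"
    have "\<chi>' (x n) = \<phi> x \<ominus>\<^bsub>M\<^esub> \<beta>0 (P x)" using x \<chi>(2) \<chi>'(2) by simp
    moreover have "\<phi> x \<in> carrier M" "\<beta>0 (P x) \<in> carrier M"
      using x Kc lhom_closed[OF \<phi>] lhom_closed[OF lhom_comp[OF P \<beta>0(1)]] by auto
    ultimately show "\<beta>0 (P x) \<oplus>\<^bsub>M\<^esub> \<chi>' (x n) = \<phi> x" by (simp add: M.M.add_minus_cancel)
  qed
  ultimately show ?thesis by (intro bexI[of _ "\<lambda>v. \<beta>0 (P v) \<oplus>\<^bsub>M\<^esub> \<chi>' (v n)"])
qed

lemma freemod_extension:
  fixes M :: "('a,'m) module"
  assumes lc: "left_coherent R" and M: "lmod R M" and sub: "kerDefect_sub_kerEv R M"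
  shows "lfingen R (freemod R n) K \<Longrightarrow> \<phi> \<in> lhom R ((freemod R n)\<lparr>carrier := K\<rparr>) M \<Longrightarrow>
    \<exists>\<beta>\<in>lhom R (freemod R n) M. \<forall>x\<in>K. \<beta> x = \<phi> x"
proof (induction n arbitrary: K \<phi>)
  case 0
  have R: "ring R" using lc by (simp add: left_coherent_def)
  have Ks: "lsubmod R (freemod R 0) K" using "0.prems"(1) by (simp add: lfingen_def)
  have "x = \<zero>\<^bsub>freemod R 0\<^esub>" if "x \<in> K" for x
    using that lsubmod_subset[OF Ks] by (auto simp: freemod_simps)
  moreover have "\<phi> \<zero>\<^bsub>freemod R 0\<^esub> = \<zero>\<^bsub>M\<^esub>"
    using lhom_zero[OF lsubmod_lmod[OF freemod_lmod[OF R] Ks] M "0.prems"(2)] by simp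
  ultimately show ?case using lhom_zero_map[OF M] by (intro bexI[of _ "\<lambda>x. \<zero>\<^bsub>M\<^esub>"]) auto
next
  case (Suc n)
  let ?Kz = "{z \<in> K. z n = \<zero>\<^bsub>R\<^esub>}"
  have "(freemod R n)\<lparr>carrier := ?Kz\<rparr> = ((freemod R (Suc n))\<lparr>carrier := K\<rparr>)\<lparr>carrier := ?Kz\<rparr>"
    by (simp add: freemod_def)
  hence "\<phi> \<in> lhom R ((freemod R n)\<lparr>carrier := ?Kz\<rparr>) M"
    using lhom_restrict[OF Suc.prems(2), of ?Kz] by auto
  hence "\<exists>\<beta>0 \<in> lhom R (freemod R n) M. \<forall>x\<in>?Kz. \<beta>0 x = \<phi> x"
    by (rule Suc.IH[OF lfingen_last_coord_kernel[OF lc Suc.prems(1)]])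
  then obtain \<beta>0 where \<beta>0: "\<beta>0 \<in> lhom R (freemod R n) M" "\<forall>x\<in>?Kz. \<beta>0 x = \<phi> x" by blast
  show ?case by (rule freemod_extension_step[OF lc M sub Suc.prems \<beta>0(1)]) (use \<beta>0(2) in simp)
qed

lemma short_exact_lift_cover:
  assumes ex: "short_exact R M E N i p" and f: "f ` carrier A = carrier N"
    and g: "g \<in> lhom R A E" "\<forall>v \<in> carrier A. p (g v) = f v" and e: "e \<in> carrier E"
  obtains m v where "m \<in> carrier M" "v \<in> carrier A" "e = i m \<oplus>\<^bsub>E\<^esub> g v"
proof -
  have E: "lmod R E" and N: "lmod R N" and p: "p \<in> lhom R E N"
    and ker: "i ` carrier M = {e \<in> carrier E. p e = \<zero>\<^bsub>N\<^esub>}"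
    using ex by (auto simp: short_exact_def)
  interpret E: lmodule R E by (rule lmodule.intro) fact
  interpret N: lmodule R N by (rule lmodule.intro) fact
  have "p e \<in> f ` carrier A" using f lhom_closed[OF p e] by simp
  then obtain v where v: "v \<in> carrier A" "p e = f v" by (rule imageE)
  have gv: "g v \<in> carrier E" using lhom_closed[OF g(1) v(1)] .
  have "p (e \<ominus>\<^bsub>E\<^esub> g v) = \<zero>\<^bsub>N\<^esub>"
    using lhom_minus[OF E N p e gv] g(2) v lhom_closed[OF p e] by (simp add: N.M.minus_zero_iff)
  hence "e \<ominus>\<^bsub>E\<^esub> g v \<in> i ` carrier M" using ker e gv by simp
  then obtain m where m: "m \<in> carrier M" "e \<ominus>\<^bsub>E\<^esub> g v = i m" by (rule imageE)
  have "e = i m \<oplus>\<^bsub>E\<^esub> g v" using m(2) E.M.minus_add_cancel[OF e gv] by simp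
  with m(1) v(1) show ?thesis by (rule that)
qed

text \<open>(m, a) \<mapsto> m + \<beta> a descends along the surjection (m, a) \<mapsto> i m + g a to a retraction of i.\<close>

lemma split_mono_of_lift:
  assumes ex: "short_exact R M E N i p" and A: "lmod R A"
    and f: "f \<in> lhom R A N" "f ` carrier A = carrier N"
    and g: "g \<in> lhom R A E" "\<forall>v \<in> carrier A. p (g v) = f v"
    and \<beta>: "\<beta> \<in> lhom R A M" "\<forall>v \<in> carrier A. f v = \<zero>\<^bsub>N\<^esub> \<longrightarrow> i (\<beta> v) = g v"
  shows "split_mono R M E i"
proof -
  have M: "lmod R M" and E: "lmod R E" and N: "lmod R N" and i: "i \<in> lhom R M E"
    and p: "p \<in> lhom R E N" and ii: "inj_on i (carrier M)" and ker: "i ` carrier M = {e \<in> carrier E. p e = \<zero>\<^bsub>N\<^esub>}"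
    using ex by (auto simp: short_exact_def)
  interpret M: lmodule R M by (rule lmodule.intro) fact
  interpret E: lmodule R E by (rule lmodule.intro) fact
  interpret N: lmodule R N by (rule lmodule.intro) fact
  interpret A: lmodule R A by (rule lmodule.intro) fact
  let ?P = "dirsum M A"
  define \<Theta> where "\<Theta> z = i (fst z) \<oplus>\<^bsub>E\<^esub> g (snd z)" for z
  define \<Psi> where "\<Psi> z = fst z \<oplus>\<^bsub>M\<^esub> \<beta> (snd z)" for z
  have \<Theta>: "\<Theta> \<in> lhom R ?P E" unfolding \<Theta>_def
    by (rule lhom_add_map[OF E lhom_comp[OF dirsum_fst_lhom i] lhom_comp[OF dirsum_snd_lhom g(1)]])
  have \<Psi>: "\<Psi> \<in> lhom R ?P M" unfolding \<Psi>_def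
    by (rule lhom_add_map[OF M dirsum_fst_lhom lhom_comp[OF dirsum_snd_lhom \<beta>(1)]])
  have "\<Theta> ` carrier ?P = carrier E"
  proof
    show "\<Theta> ` carrier ?P \<subseteq> carrier E" using lhom_closed[OF \<Theta>] by blast
    show "carrier E \<subseteq> \<Theta> ` carrier ?P"
    proof
      fix e assume "e \<in> carrier E"
      then obtain m v where "m \<in> carrier M" "v \<in> carrier A" "e = i m \<oplus>\<^bsub>E\<^esub> g v"
        by (rule short_exact_lift_cover[OF ex f(2) g])
      thus "e \<in> \<Theta> ` carrier ?P" by (intro image_eqI[of _ \<Theta> "(m, v)"]) (auto simp: \<Theta>_def)
    qed
  qed
  moreover have "\<Psi> z = \<zero>\<^bsub>M\<^esub>" if z: "z \<in> carrier ?P" "\<Theta> z = \<zero>\<^bsub>E\<^esub>" for z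
  proof -
    obtain m v where mv: "z = (m, v)" "m \<in> carrier M" "v \<in> carrier A" using z(1) by auto
    have c: "i m \<in> carrier E" "g v \<in> carrier E" using lhom_closed[OF i mv(2)] lhom_closed[OF g(1) mv(3)] by auto
    have "p (i m) = \<zero>\<^bsub>N\<^esub>" using ker mv(2) by blast
    hence "f v = \<zero>\<^bsub>N\<^esub>"
      using z(2) lhom_add[OF p c] g(2) mv lhom_closed[OF f(1) mv(3)] lhom_zero[OF E N p]
      by (simp add: \<Theta>_def)
    hence "i (m \<oplus>\<^bsub>M\<^esub> \<beta> v) = i \<zero>\<^bsub>M\<^esub>"
      using lhom_add[OF i mv(2) lhom_closed[OF \<beta>(1) mv(3)]] \<beta>(2) mv z(2) lhom_zero[OF M E i]
      by (simp add: \<Theta>_def)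
    hence "m \<oplus>\<^bsub>M\<^esub> \<beta> v = \<zero>\<^bsub>M\<^esub>" using ii mv(2) lhom_closed[OF \<beta>(1) mv(3)] by (simp add: inj_on_def)
    thus ?thesis by (simp add: \<Psi>_def mv(1))
  qed
  ultimately obtain r where r: "r \<in> lhom R E M" "\<forall>z \<in> carrier ?P. r (\<Theta> z) = \<Psi> z"
    using lhom_factor_surj[OF dirsum_lmod[OF M A] E M \<Theta> _ \<Psi>] by blast
  have "r (i m) = m" if m: "m \<in> carrier M" for m
  proof -
    have "r (\<Theta> (m, \<zero>\<^bsub>A\<^esub>)) = \<Psi> (m, \<zero>\<^bsub>A\<^esub>)" using r(2) m by simp
    thus ?thesis using m lhom_closed[OF i m] lhom_zero[OF A E g(1)] lhom_zero[OF A M \<beta>(1)]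
      by (simp add: \<Theta>_def \<Psi>_def)
  qed
  thus ?thesis unfolding split_mono_def using r(1) by blast
qed

theorem kerDefect_sub_kerEv_fp_injective:
  fixes M :: "('a,'m) module"
  assumes lc: "left_coherent R" and M: "lmod R M" and sub: "kerDefect_sub_kerEv R M"
  shows "fp_injective R M"
  unfolding fp_injective_def ext1_zero_def
proof (intro allI impI)
  fix N :: "'a fpmod" and E :: "('a, 'm \<times> (nat \<Rightarrow> 'a) set) module" and i p
  assume N: "lfp R N" and "lmod R E \<and> i \<in> lhom R M E \<and> p \<in> lhom R E N \<and> inj_on i (carrier M) \<and>
    p ` carrier E = carrier N \<and> i ` carrier M = {e \<in> carrier E. p e = \<zero>\<^bsub>N\<^esub>}"
  hence ex: "short_exact R M E N i p" using M N by (simp add: short_exact_def lfp_def)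
  have R: "ring R" and E: "lmod R E" and Nl: "lmod R N" and i: "i \<in> lhom R M E" and p: "p \<in> lhom R E N"
    using ex lmod_ring[OF M] by (auto simp: short_exact_def)
  obtain n f G where f: "f \<in> lhom R (freemod R n) N" "f ` carrier (freemod R n) = carrier N"
    and G: "finite G" "G \<subseteq> carrier (freemod R n)"
      "{v \<in> carrier (freemod R n). f v = \<zero>\<^bsub>N\<^esub>} = lspan R (freemod R n) G"
    by (rule lfpE[OF N])
  let ?F = "freemod R n" and ?K = "{v \<in> carrier (freemod R n). f v = \<zero>\<^bsub>N\<^esub>}"
  obtain g where g: "g \<in> lhom R ?F E" "\<forall>v \<in> carrier ?F. p (g v) = f v"
    by (rule freemod_lift[OF R E Nl p f(1)]) (use ex f(2) in \<open>simp add: short_exact_def\<close>)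
  have gK: "g v \<in> i ` carrier M" if "v \<in> ?K" for v
    using ex that g lhom_closed[OF g(1)] by (auto simp: short_exact_def)
  have \<phi>: "(\<lambda>v. inv_into (carrier M) i (g v)) \<in> lhom R (?F\<lparr>carrier := ?K\<rparr>) M"
    using ex gK by (intro lhom_factor_inj[OF M i _ lhom_restrict[OF g(1)]]) (auto simp: short_exact_def)
  have "\<exists>\<beta> \<in> lhom R ?F M. \<forall>v\<in>?K. \<beta> v = inv_into (carrier M) i (g v)"
    by (rule freemod_extension[OF lc M sub _ \<phi>]) (use G lfingen_lspan[OF freemod_lmod[OF R]] in simp)
  then obtain \<beta> where \<beta>: "\<beta> \<in> lhom R ?F M" "\<forall>v\<in>?K. \<beta> v = inv_into (carrier M) i (g v)" by blast
  have "\<forall>v \<in> carrier ?F. f v = \<zero>\<^bsub>N\<^esub> \<longrightarrow> i (\<beta> v) = g v"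
    using \<beta>(2) gK by (auto simp: f_inv_into_f)
  thus "\<exists>r\<in>lhom R E M. \<forall>x\<in>carrier M. r (i x) = x"
    using split_mono_of_lift[OF ex freemod_lmod[OF R] f g \<beta>(1)] by (simp add: split_mono_def)
qed

section \<open>fp-cogenerators\<close>

theorem kerDefect_eq_kerEv_fp_cogenerator:
  fixes M :: "('a,'m) module"
  assumes M: "lmod R M" and eq: "kerDefect_eq_kerEv R M"
  shows "fp_cogenerator R M"
  unfolding fp_cogenerator_def
proof (intro allI impI ballI)
  fix A B :: "'a fpmod" and f g x
  assume "lfp R A \<and> lfp R B \<and> f \<in> lhom R A B \<and> g \<in> lhom R A B \<and>
    (\<forall>h\<in>lhom R B M. \<forall>x\<in>carrier A. h (f x) = h (g x))"
  hence B: "lfp R B" and f: "f \<in> lhom R A B" and g: "g \<in> lhom R A B"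
    and hyp: "\<forall>h\<in>lhom R B M. \<forall>x\<in>carrier A. h (f x) = h (g x)" by auto
  assume x: "x \<in> carrier A"
  have Bl: "lmod R B" using B by (simp add: lfp_def)
  interpret M: lmodule R M by (rule lmodule.intro) fact
  interpret B: lmodule R B by (rule lmodule.intro) fact
  define y where "y = f x \<ominus>\<^bsub>B\<^esub> g x"
  have fg: "f x \<in> carrier B" "g x \<in> carrier B" using lhom_closed[OF f x] lhom_closed[OF g x] by auto
  hence yc: "y \<in> carrier B" by (simp add: y_def)
  have "lfingen R B (lspan R B {y})" using lfingen_lspan[OF Bl] yc by simp
  then obtain C :: "'a fpmod" and c where C: "lfp R C" "c \<in> lhom R B C" "c ` carrier B = carrier C"
    "{z \<in> carrier B. c z = \<zero>\<^bsub>C\<^esub>} = lspan R B {y}"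
    by (rule lfp_cokernel[OF B])
  have Cl: "lmod R C" using C(1) by (simp add: lfp_def)
  have "ev_zero R B C c M" unfolding ev_zero_def
  proof
    fix h assume h: "h \<in> lhom R B M"
    have "h (f x) = h (g x)" using hyp h x by blast
    hence "h y = \<zero>\<^bsub>M\<^esub>"
      using lhom_minus[OF Bl M h fg] lhom_closed[OF h fg(2)] by (simp add: y_def M.M.minus_zero_iff)
    hence "lspan R B {y} \<subseteq> {z \<in> carrier B. h z = \<zero>\<^bsub>M\<^esub>}"
      using yc by (intro lspan_minimal[OF lsubmod_kernel[OF Bl M h]]) simp
    hence "\<And>z. z \<in> carrier B \<Longrightarrow> c z = \<zero>\<^bsub>C\<^esub> \<Longrightarrow> h z = \<zero>\<^bsub>M\<^esub>" using C(4) by blast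
    thus "\<exists>\<beta>\<in>lhom R C M. \<forall>z\<in>carrier B. \<beta> (c z) = h z" by (rule lhom_factor_surj[OF Bl Cl M C(2,3) h])
  qed
  hence "defect_zero B C c" using eq B C(1,2) by (simp add: kerDefect_eq_kerEv_def)
  moreover have "c y = \<zero>\<^bsub>C\<^esub>" using C(4) lspan_superset[of "{y}" B R] yc by blast
  ultimately have "y = \<zero>\<^bsub>B\<^esub>" using yc by (simp add: defect_zero_def)
  thus "f x = g x" using fg by (simp add: y_def B.M.minus_zero_iff)
qed

lemma fp_cogenerator_defect_zero:
  fixes M :: "('a,'m) module" and N N' :: "'a fpmod"
  assumes M: "lmod R M" and cg: "fp_cogenerator R M" and N: "lfp R N" and N': "lfp R N'"
    and \<alpha>: "\<alpha> \<in> lhom R N N'" and ev: "ev_zero R N N' \<alpha> M"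
  shows "defect_zero N N' \<alpha>"
  unfolding defect_zero_def
proof (intro ballI impI)
  fix x assume x: "x \<in> carrier N" and \<alpha>x: "\<alpha> x = \<zero>\<^bsub>N'\<^esub>"
  have Nl: "lmod R N" and N'l: "lmod R N'" and R: "ring R" using N N' lmod_ring[OF M] by (auto simp: lfp_def)
  let ?F = "freemod R 1"
  obtain A :: "'a fpmod" and t where A: "lfp R A" "t \<in> lhom R ?F A" "bij_betw t (carrier ?F) (carrier A)"
    by (rule lfp_iso_fpmod[OF freemod_lfp[OF R]])
  define w where "w z = lincomb R N (\<lambda>_. x) 1 (inv_into (carrier ?F) t z)" for z
  have w: "w \<in> lhom R A N"
    unfolding w_def by (rule lhom_comp[OF lhom_inv_into[OF A(2,3) freemod_lmod[OF R]] lincomb_lhom[OF Nl]])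
      (use x in simp)
  have wt: "w (t (unit_vec R 0)) = x"
    using A(3) unit_vec_carrier[OF R, of 0 1] lincomb_unit_vec[OF Nl, of 1 "\<lambda>_. x" 0] x
    by (simp add: w_def bij_betw_def)
  have "\<forall>z \<in> carrier A. w z = \<zero>\<^bsub>N\<^esub>"
  proof -
    have "h (w z) = h \<zero>\<^bsub>N\<^esub>" if h: "h \<in> lhom R N M" and z: "z \<in> carrier A" for h z
    proof -
      obtain \<beta> where \<beta>: "\<beta> \<in> lhom R N' M" "\<forall>u\<in>carrier N. \<beta> (\<alpha> u) = h u"
        using ev h unfolding ev_zero_def by blast
      have "\<alpha> (w z) = \<zero>\<^bsub>N'\<^esub>"
      proof -
        have "inv_into (carrier ?F) t z \<in> carrier ?F" using A(3) z by (auto simp: bij_betw_def inv_into_into)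
        hence "\<alpha> (lincomb R N (\<lambda>_. x) 1 (inv_into (carrier ?F) t z)) = (\<lambda>_. \<zero>\<^bsub>N'\<^esub>) z"
          using freemod_lhom_eq[OF R N'l lhom_comp[OF lincomb_lhom[OF Nl] \<alpha>] lhom_zero_map[OF N'l]] x \<alpha>x
          by (simp add: lincomb_unit_vec[OF Nl])
        thus ?thesis by (simp add: w_def)
      qed
      thus ?thesis using \<beta> lhom_closed[OF w z] lhom_zero[OF N'l M \<beta>(1)] lhom_zero[OF Nl M h] by metis
    qed
    thus ?thesis using cg A(1) N w lhom_zero_map[OF Nl] unfolding fp_cogenerator_def by blast
  qed
  thus "x = \<zero>\<^bsub>N\<^esub>" using wt lhom_closed[OF A(2) unit_vec_carrier[OF R, of 0 1]] by auto
qed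

theorem mainTheorem9:
  fixes R :: "'a ring" and M :: "('a, 'm) module"
  assumes "left_coherent R" and "lmod R M"
  shows "(kerDefect_sub_kerEv R M \<longleftrightarrow> fp_injective R M) \<and>
         (kerDefect_eq_kerEv R M \<longleftrightarrow> fp_injective R M \<and> fp_cogenerator R M)"
proof -
  have part1: "kerDefect_sub_kerEv R M \<longleftrightarrow> fp_injective R M"
    using kerDefect_sub_kerEv_fp_injective[OF assms] fp_injective_kerDefect_sub_kerEv[OF assms(2)] by blast
  have "kerDefect_eq_kerEv R M \<longleftrightarrow> kerDefect_sub_kerEv R M \<and> fp_cogenerator R M"
  proof
    assume "kerDefect_eq_kerEv R M"
    thus "kerDefect_sub_kerEv R M \<and> fp_cogenerator R M"
      using kerDefect_eq_kerEv_fp_cogenerator[OF assms(2)]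
      unfolding kerDefect_eq_kerEv_def kerDefect_sub_kerEv_def by blast
  next
    assume "kerDefect_sub_kerEv R M \<and> fp_cogenerator R M"
    thus "kerDefect_eq_kerEv R M"
      using fp_cogenerator_defect_zero[OF assms(2)]
      unfolding kerDefect_eq_kerEv_def kerDefect_sub_kerEv_def by blast
  qed
  with part1 show ?thesis by blast
qed

end
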